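(* Let $X$ be a compact Hausdorff space. The assignment sending a (semi-continuous) Banach bundle $(E,X,\pi)$ to the family $(E_n)_{n\ge1}$, $E_n=\{f\in E:\|f\|\le n\}$ with the subspace topology, is an equivalence of categories from Banach bundles over $X$ to bundles over $X$ of models of the continuous theory of Banach spaces; its inverse sends $(E_n)_{n\ge1}$ to $E=\bigcup_nE_n$ equipped with the final topology with respect to the inclusions $E_n\hookrightarrow E$.
   Context: A (semi-continuous) Banach bundle over $X$ is a surjection $\pi:E\to X$ of topological spaces such that: (1) each fibre $E_x$ is a Banach space over $\mathbb K\in\{\mathbb R,\mathbb C\}$; (2) $\pi$ is continuous and open; (3) scalar multiplication $\mathbb K\times E\to E$ and addition $E\times_XE\to E$ are continuous ($E\times_XE=\{(f,g):\pi f=\pi g\}$ with subspace topology); (4) the norm $E\to[0,\infty)$ is upper semicontinuous ($\{f:\|f\|<r\}$ open for all $r$); (5) for each $x\in X$ the sets $\coprod_{y\in U}B(0_y,r)$, $r>0$, $U$ open neighbourhood of $x$, form a neighbourhood basis of $0_x$. Morphisms: continuous maps over $X$ which are linear contractions on each fibre. Bundle of complete metric spaces bounded by $k$: surjection $\pi:E\to X$ with complete metric fibres (distances $\le k$), upper semicontinuous global distance on $E\times_XE$, continuous open $\pi$, and for every open $W$ and $f\in W$ an open $V\ni f$ and $\epsilon>0$ with $V\subseteq V_\epsilon\subseteq W$ ($V_\epsilon=\{g:\exists h\in V,\pi g=\pi h,d(g,h)<\epsilon\}$). A bundle of models of the continuous theory of Banach spaces over $X$ is a family $(E_n)_{n\ge1}$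 where $E_n$ is such a bundle (bound $2n$), together with Banach spaces $B_x$ ($x\in X$) such that the fibre $(E_n)_x$ is the closed ball of radius $n$ of $B_x$ with the norm metric, and such that the following global maps are continuous: the inclusions $E_n\to E_m$ ($n<m$), addition $E_n\times_XE_m\to E_{n+m}$, multiplication by each scalar $\lambda$ as a map $E_n\to E_{\lceil|\lambda|n\rceil}$, and the zero section $X\to E_1$. Morphisms: families of bundle morphisms $E_n\to E'_n$ which on each fibre are restrictions of a single linear contraction $B_x\to B'_x$. *)

theory Defs
  imports "HOL-Analysis.Analysis"
begin

text \<open>Scalars are complex numbers restricted to a scalar field K, which is either the
reals (embedded in the complex numbers) or all complex numbers.\<close>

record ('x, 'e) fibred =
  carr :: "'e set"
  proj :: "'e \<Rightarrow> 'x"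
  fadd :: "'e \<Rightarrow> 'e \<Rightarrow> 'e"
  fsmul :: "complex \<Rightarrow> 'e \<Rightarrow> 'e"
  fnorm :: "'e \<Rightarrow> real"
  fzero :: "'x \<Rightarrow> 'e"

definition fibre :: "('x, 'e) fibred \<Rightarrow> 'x \<Rightarrow> 'e set" where
  "fibre S x = {f \<in> carr S. proj S f = x}"

definition fsub :: "('x, 'e) fibred \<Rightarrow> 'e \<Rightarrow> 'e \<Rightarrow> 'e" where
  "fsub S f g = fadd S f (fsmul S (-1) g)"

definition fibprod :: "'e set \<Rightarrow> ('e \<Rightarrow> 'x) \<Rightarrow> ('e \<times> 'e) set" where
  "fibprod C p = {(f, g). f \<in> C \<and> g \<in> C \<and> p f = p g}"

definition banach_fibres :: "complex set \<Rightarrow> 'x topology \<Rightarrow> ('x, 'e) fibred \<Rightarrow> bool" where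
  "banach_fibres K X S \<longleftrightarrow>
     proj S ` carr S = topspace X \<and>
     (\<forall>x \<in> topspace X.
        fzero S x \<in> fibre S x \<and>
        (\<forall>f \<in> fibre S x. \<forall>g \<in> fibre S x. fadd S f g \<in> fibre S x) \<and>
        (\<forall>c \<in> K. \<forall>f \<in> fibre S x. fsmul S c f \<in> fibre S x) \<and>
        (\<forall>f \<in> fibre S x. \<forall>g \<in> fibre S x. \<forall>h \<in> fibre S x.
            fadd S (fadd S f g) h = fadd S f (fadd S g h)) \<and>
        (\<forall>f \<in> fibre S x. \<forall>g \<in> fibre S x. fadd S f g = fadd S g f) \<and>
        (\<forall>f \<in> fibre S x. fadd S f (fzero S x) = f) \<and>
        (\<forall>f \<in> fibre S x. fadd S f (fsmul S (-1) f) = fzero S x) \<and>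
        (\<forall>f \<in> fibre S x. fsmul S 1 f = f) \<and>
        (\<forall>c \<in> K. \<forall>d \<in> K. \<forall>f \<in> fibre S x. fsmul S c (fsmul S d f) = fsmul S (c * d) f) \<and>
        (\<forall>c \<in> K. \<forall>d \<in> K. \<forall>f \<in> fibre S x. fsmul S (c + d) f = fadd S (fsmul S c f) (fsmul S d f)) \<and>
        (\<forall>c \<in> K. \<forall>f \<in> fibre S x. \<forall>g \<in> fibre S x.
            fsmul S c (fadd S f g) = fadd S (fsmul S c f) (fsmul S c g)) \<and>
        (\<forall>f \<in> fibre S x. 0 \<le> fnorm S f) \<and>
        (\<forall>f \<in> fibre S x. fnorm S f = 0 \<longleftrightarrow> f = fzero S x) \<and>
        (\<forall>c \<in> K. \<forall>f \<in> fibre S x. fnorm S (fsmul S c f) = cmod c * fnorm S f) \<and>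
        (\<forall>f \<in> fibre S x. \<forall>g \<in> fibre S x. fnorm S (fadd S f g) \<le> fnorm S f + fnorm S g) \<and>
        (\<forall>u :: nat \<Rightarrow> 'e. (\<forall>n. u n \<in> fibre S x) \<and>
            (\<forall>e > 0. \<exists>N. \<forall>m \<ge> N. \<forall>n \<ge> N. fnorm S (fsub S (u m) (u n)) < e) \<longrightarrow>
            (\<exists>f \<in> fibre S x. (\<lambda>n. fnorm S (fsub S (u n) f)) \<longlonglongrightarrow> 0)))"

definition banach_bundle ::
  "complex set \<Rightarrow> 'x topology \<Rightarrow> ('x, 'e) fibred \<Rightarrow> 'e topology \<Rightarrow> bool" where
  "banach_bundle K X S TE \<longleftrightarrow>
     topspace TE = carr S \<and>
     banach_fibres K X S \<and>
     continuous_map TE X (proj S) \<and> open_map TE X (proj S) \<and>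
     continuous_map (prod_topology (top_of_set K) TE) TE (\<lambda>(c, f). fsmul S c f) \<and>
     continuous_map (subtopology (prod_topology TE TE) (fibprod (carr S) (proj S))) TE
        (\<lambda>(f, g). fadd S f g) \<and>
     (\<forall>r. openin TE {f \<in> carr S. fnorm S f < r}) \<and>
     (\<forall>x \<in> topspace X.
        (\<forall>U r. openin X U \<and> x \<in> U \<and> r > 0 \<longrightarrow>
           (\<exists>V. openin TE V \<and> fzero S x \<in> V \<and>
                V \<subseteq> {f \<in> carr S. proj S f \<in> U \<and> fnorm S f < r})) \<and>
        (\<forall>W. openin TE W \<and> fzero S x \<in> W \<longrightarrow>
           (\<exists>U r. openin X U \<and> x \<in> U \<and> r > 0 \<and>
                  {f \<in> carr S. proj S f \<in> U \<and> fnorm S f < r} \<subseteq> W)))"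

definition fibrewise_linear_contraction ::
  "complex set \<Rightarrow> ('x, 'e) fibred \<Rightarrow> ('x, 'e2) fibred \<Rightarrow> ('e \<Rightarrow> 'e2) \<Rightarrow> bool" where
  "fibrewise_linear_contraction K S S' \<phi> \<longleftrightarrow>
     (\<forall>f \<in> carr S. \<phi> f \<in> carr S' \<and> proj S' (\<phi> f) = proj S f) \<and>
     (\<forall>f \<in> carr S. \<forall>g \<in> carr S. proj S f = proj S g \<longrightarrow>
          \<phi> (fadd S f g) = fadd S' (\<phi> f) (\<phi> g)) \<and>
     (\<forall>c \<in> K. \<forall>f \<in> carr S. \<phi> (fsmul S c f) = fsmul S' c (\<phi> f)) \<and>
     (\<forall>f \<in> carr S. fnorm S' (\<phi> f) \<le> fnorm S f)"

definition bundle_morphism ::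
  "complex set \<Rightarrow> ('x, 'e) fibred \<Rightarrow> 'e topology \<Rightarrow> ('x, 'e2) fibred \<Rightarrow> 'e2 topology
     \<Rightarrow> ('e \<Rightarrow> 'e2) \<Rightarrow> bool" where
  "bundle_morphism K S TE S' TE' \<phi> \<longleftrightarrow>
     continuous_map TE TE' \<phi> \<and> fibrewise_linear_contraction K S S' \<phi>"

text \<open>Bundle of complete metric spaces bounded by k, total space topology T, projection p,
distance d (only meaningful on the fibre product).\<close>
definition cm_bundle ::
  "'x topology \<Rightarrow> 'e topology \<Rightarrow> ('e \<Rightarrow> 'x) \<Rightarrow> ('e \<Rightarrow> 'e \<Rightarrow> real) \<Rightarrow> real \<Rightarrow> bool" where
  "cm_bundle X T p d k \<longleftrightarrow>
     p ` topspace T = topspace X \<and>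
     (\<forall>x \<in> topspace X.
        let F = {f \<in> topspace T. p f = x} in
        (\<forall>f \<in> F. \<forall>g \<in> F. 0 \<le> d f g \<and> (d f g = 0 \<longleftrightarrow> f = g) \<and> d f g = d g f \<and> d f g \<le> k) \<and>
        (\<forall>f \<in> F. \<forall>g \<in> F. \<forall>h \<in> F. d f h \<le> d f g + d g h) \<and>
        (\<forall>u :: nat \<Rightarrow> 'e. (\<forall>n. u n \<in> F) \<and>
            (\<forall>e > 0. \<exists>N. \<forall>m \<ge> N. \<forall>n \<ge> N. d (u m) (u n) < e) \<longrightarrow>
            (\<exists>f \<in> F. (\<lambda>n. d (u n) f) \<longlonglongrightarrow> 0))) \<and>
     (\<forall>r. openin (subtopology (prod_topology T T) (fibprod (topspace T) p))
              {(f, g) \<in> fibprod (topspace T) p. d f g < r}) \<and>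
     continuous_map T X p \<and> open_map T X p \<and>
     (\<forall>W f. openin T W \<and> f \<in> W \<longrightarrow>
        (\<exists>V e. openin T V \<and> f \<in> V \<and> e > 0 \<and>
           (let Ve = {g \<in> topspace T. \<exists>h \<in> V. p g = p h \<and> d g h < e} in V \<subseteq> Ve \<and> Ve \<subseteq> W)))"

definition fball :: "('x, 'e) fibred \<Rightarrow> nat \<Rightarrow> 'e set" where
  "fball S n = {f \<in> carr S. fnorm S f \<le> real n}"

text \<open>The Banach spaces B_x are
the fibres of S; T n (n \<ge> 1) is the topology of the n-th sort E_n, whose fibres are the
closed balls of radius n. The inclusions E_n \<rightarrow> E_m are identities.\<close>
definition model_bundle ::
  "complex set \<Rightarrow> 'x topology \<Rightarrow> ('x, 'e) fibred \<Rightarrow> (nat \<Rightarrow> 'e topology) \<Rightarrow> bool" where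
  "model_bundle K X S T \<longleftrightarrow>
     banach_fibres K X S \<and>
     (\<forall>n \<ge> 1. topspace (T n) = fball S n \<and>
        cm_bundle X (T n) (proj S) (\<lambda>f g. fnorm S (fsub S f g)) (2 * real n)) \<and>
     (\<forall>n m. 1 \<le> n \<and> n < m \<longrightarrow> continuous_map (T n) (T m) id) \<and>
     (\<forall>n m. 1 \<le> n \<and> 1 \<le> m \<longrightarrow>
        continuous_map (subtopology (prod_topology (T n) (T m)) (fibprod (carr S) (proj S)))
          (T (n + m)) (\<lambda>(f, g). fadd S f g)) \<and>
     (\<forall>c \<in> K. c \<noteq> 0 \<longrightarrow> (\<forall>n \<ge> 1.
        continuous_map (T n) (T (nat \<lceil>cmod c * real n\<rceil>)) (fsmul S c))) \<and>
     continuous_map X (T 1) (fzero S)"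

definition model_morphism ::
  "complex set \<Rightarrow> ('x, 'e) fibred \<Rightarrow> (nat \<Rightarrow> 'e topology) \<Rightarrow> ('x, 'e2) fibred
     \<Rightarrow> (nat \<Rightarrow> 'e2 topology) \<Rightarrow> ('e \<Rightarrow> 'e2) \<Rightarrow> bool" where
  "model_morphism K S T S' T' \<phi> \<longleftrightarrow>
     fibrewise_linear_contraction K S S' \<phi> \<and>
     (\<forall>n \<ge> 1. continuous_map (T n) (T' n) \<phi>)"

definition to_models :: "('x, 'e) fibred \<Rightarrow> 'e topology \<Rightarrow> nat \<Rightarrow> 'e topology" where
  "to_models S TE n = subtopology TE (fball S n)"

definition from_models :: "('x, 'e) fibred \<Rightarrow> (nat \<Rightarrow> 'e topology) \<Rightarrow> 'e topology" where
  "from_models S T = topology (\<lambda>U. U \<subseteq> carr S \<and> (\<forall>n \<ge> 1. openin (T n) (U \<inter> topspace (T n))))"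

end

theory Submission
  imports Defs
begin

(*
  A Banach bundle topology is coherent with its closed balls E_n = {f. ||f|| <= n}: if U meets
  every E_n in a relatively open set, then near a point f with ||f|| < n the set U contains
  W \<inter> {g. ||g|| < n} for some open W, and {g. ||g|| < n} is open by upper semicontinuity
  of the norm. Hence the final topology of the balls is the original one, and continuity can
  be tested ball by ball. That each E_n is a bundle of complete metric spaces is inherited
  fibrewise and from the continuity of the operations.

  Conversely, let (E_n) be a bundle of models. Near a point f of an open set U of E_n, the
  uniformity condition V \<subseteq> V_e \<subseteq> U of E_n and the upper semicontinuity of the
  distance of E_m (m \<ge> n) give an open set of E_m whose points in E_n are e-close to V in
  their own fibre, hence lie in U. So U is the trace of an open set of E_(n+1), and iterating,
  of an open set of the union E: each E_n is a subspace of E. The Banach bundle axioms of E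
  then follow sort by sort; scalar multiplication is continuous because
  ||c g - c0 g|| \<le> |c - c0| n on E_n.
*)

section \<open>Fibrewise normed spaces\<close>

locale scalar_field =
  fixes K :: "complex set"
  assumes real_or_complex: "K = range complex_of_real \<or> K = UNIV"
begin

lemma of_real_mem: "complex_of_real r \<in> K"
  using real_or_complex by auto

lemma zero_mem: "0 \<in> K" and one_mem: "1 \<in> K" and minus_one_mem: "-1 \<in> K"
  using of_real_mem[of 0] of_real_mem[of 1] of_real_mem[of "-1"] by simp_all

lemma uminus_mem: "c \<in> K \<Longrightarrow> - c \<in> K"
  using real_or_complex by (auto simp flip: of_real_minus)

lemma diff_mem: "c \<in> K \<Longrightarrow> d \<in> K \<Longrightarrow> c - d \<in> K"
  using real_or_complex by (auto simp flip: of_real_diff)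

end

locale normed_fibre = scalar_field K
  for K :: "complex set" +
  fixes F :: "'e set" and add :: "'e \<Rightarrow> 'e \<Rightarrow> 'e"
    and smul :: "complex \<Rightarrow> 'e \<Rightarrow> 'e" and nrm :: "'e \<Rightarrow> real" and z :: 'e
  assumes zero_closed: "z \<in> F"
    and add_closed: "\<And>f g. f \<in> F \<Longrightarrow> g \<in> F \<Longrightarrow> add f g \<in> F"
    and smul_closed: "\<And>c f. c \<in> K \<Longrightarrow> f \<in> F \<Longrightarrow> smul c f \<in> F"
    and assoc: "\<And>f g h. f \<in> F \<Longrightarrow> g \<in> F \<Longrightarrow> h \<in> F \<Longrightarrow> add (add f g) h = add f (add g h)"
    and commute: "\<And>f g. f \<in> F \<Longrightarrow> g \<in> F \<Longrightarrow> add f g = add g f"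
    and right_zero: "\<And>f. f \<in> F \<Longrightarrow> add f z = f"
    and right_inverse: "\<And>f. f \<in> F \<Longrightarrow> add f (smul (-1) f) = z"
    and scale_one: "\<And>f. f \<in> F \<Longrightarrow> smul 1 f = f"
    and scale_scale: "\<And>c d f. c \<in> K \<Longrightarrow> d \<in> K \<Longrightarrow> f \<in> F \<Longrightarrow> smul c (smul d f) = smul (c * d) f"
    and scale_left_distrib:
      "\<And>c d f. c \<in> K \<Longrightarrow> d \<in> K \<Longrightarrow> f \<in> F \<Longrightarrow> smul (c + d) f = add (smul c f) (smul d f)"
    and scale_right_distrib:
      "\<And>c f g. c \<in> K \<Longrightarrow> f \<in> F \<Longrightarrow> g \<in> F \<Longrightarrow> smul c (add f g) = add (smul c f) (smul c g)"
    and nrm_nonneg: "\<And>f. f \<in> F \<Longrightarrow> 0 \<le> nrm f"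
    and nrm_eq_0_iff: "\<And>f. f \<in> F \<Longrightarrow> nrm f = 0 \<longleftrightarrow> f = z"
    and nrm_smul: "\<And>c f. c \<in> K \<Longrightarrow> f \<in> F \<Longrightarrow> nrm (smul c f) = cmod c * nrm f"
    and nrm_triangle: "\<And>f g. f \<in> F \<Longrightarrow> g \<in> F \<Longrightarrow> nrm (add f g) \<le> nrm f + nrm g"
begin

abbreviation sub :: "'e \<Rightarrow> 'e \<Rightarrow> 'e" where
  "sub f g \<equiv> add f (smul (-1) g)"

lemma neg_closed: "f \<in> F \<Longrightarrow> smul (-1) f \<in> F"
  using smul_closed minus_one_mem by blast

lemma sub_closed: "f \<in> F \<Longrightarrow> g \<in> F \<Longrightarrow> sub f g \<in> F"
  using add_closed neg_closed by blast

lemma nrm_zero: "nrm z = 0"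
  using nrm_eq_0_iff zero_closed by blast

lemma left_zero: "f \<in> F \<Longrightarrow> add z f = f"
  using commute right_zero zero_closed by metis

lemma scale_zero: "c \<in> K \<Longrightarrow> smul c z = z"
  using nrm_smul[of c z] nrm_zero nrm_eq_0_iff smul_closed zero_closed by auto

lemma zero_scale: "f \<in> F \<Longrightarrow> smul 0 f = z"
  using nrm_smul[OF zero_mem] nrm_eq_0_iff smul_closed zero_mem by auto

lemma sub_zero: "f \<in> F \<Longrightarrow> sub f z = f"
  using scale_zero[OF minus_one_mem] right_zero by simp

lemma nrm_neg: "f \<in> F \<Longrightarrow> nrm (smul (-1) f) = nrm f"
  using nrm_smul[OF minus_one_mem] by simp

lemma sub_commute: assumes "f \<in> F" "g \<in> F" shows "sub f g = smul (-1) (sub g f)"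
proof -
  have "smul (-1) (sub g f) = add (smul (-1) g) (smul (-1) (smul (-1) f))"
    using scale_right_distrib minus_one_mem neg_closed assms by simp
  also have "\<dots> = add (smul (-1) g) f"
    using scale_scale[OF minus_one_mem minus_one_mem] scale_one assms by simp
  also have "\<dots> = sub f g"
    using commute neg_closed assms by simp
  finally show ?thesis by simp
qed

lemma nrm_sub_commute: "f \<in> F \<Longrightarrow> g \<in> F \<Longrightarrow> nrm (sub f g) = nrm (sub g f)"
  using sub_commute nrm_neg sub_closed by metis

lemma sub_eq_zero_iff: assumes "f \<in> F" "g \<in> F" shows "sub f g = z \<longleftrightarrow> f = g"
proof
  assume "sub f g = z"
  then have "g = add g (sub f g)" using assms right_zero by simp
  also have "\<dots> = add f (add g (smul (-1) g))"
    using assoc commute assms neg_closed by metis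
  also have "\<dots> = f" using right_inverse right_zero assms by simp
  finally show "f = g" by simp
qed (use right_inverse assms in simp)

lemma nrm_sub_eq_0_iff: "f \<in> F \<Longrightarrow> g \<in> F \<Longrightarrow> nrm (sub f g) = 0 \<longleftrightarrow> f = g"
  using nrm_eq_0_iff sub_closed sub_eq_zero_iff by metis

lemma sub_add_sub: assumes "f \<in> F" "g \<in> F" "h \<in> F"
  shows "add (sub f g) (sub g h) = sub f h"
proof -
  have "add (sub f g) (sub g h) = add f (add (add (smul (-1) g) g) (smul (-1) h))"
    using assoc assms neg_closed add_closed by simp
  also have "\<dots> = add f (add z (smul (-1) h))"
    using commute right_inverse assms neg_closed by metis
  finally show ?thesis using left_zero neg_closed assms by simp
qed

lemma nrm_sub_triangle: "f \<in> F \<Longrightarrow> g \<in> F \<Longrightarrow> h \<in> F \<Longrightarrow> nrm (sub f h) \<le> nrm (sub f g) + nrm (sub g h)"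
  using sub_add_sub nrm_triangle sub_closed by metis

lemma nrm_sub_le: "f \<in> F \<Longrightarrow> g \<in> F \<Longrightarrow> nrm (sub f g) \<le> nrm f + nrm g"
  using nrm_triangle nrm_neg neg_closed by metis

lemma add_sub_cancel: assumes "f \<in> F" "g \<in> F" shows "add f (sub g f) = g"
proof -
  have "add f (sub g f) = add g (add f (smul (-1) f))"
    using assoc commute assms neg_closed by metis
  then show ?thesis using right_inverse right_zero assms by simp
qed

lemma nrm_le_nrm_sub: assumes "f \<in> F" "g \<in> F" shows "nrm f \<le> nrm g + nrm (sub f g)"
  using nrm_triangle[of g "sub f g"] add_sub_cancel[of g f] assms sub_closed by simp

lemma scale_diff: assumes "c \<in> K" "d \<in> K" "f \<in> F"
  shows "sub (smul c f) (smul d f) = smul (c - d) f"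
  using scale_scale[OF minus_one_mem assms(2,3)] scale_left_distrib[of c "- d" f]
    assms uminus_mem by simp

end

lemma normed_fibre_of_banach_fibres:
  assumes "scalar_field K" "banach_fibres K X S" "x \<in> topspace X"
  shows "normed_fibre K (fibre S x) (fadd S) (fsmul S) (fnorm S) (fzero S x)"
proof -
  note fibre_axioms = assms(2)[unfolded banach_fibres_def, THEN conjunct2, rule_format, OF assms(3)]
  show ?thesis
    by (insert assms(1) fibre_axioms, unfold_locales) (elim conjE; simp add: scalar_field_def; fail)+
qed

lemma fibre_iff: "f \<in> fibre S x \<longleftrightarrow> f \<in> carr S \<and> proj S f = x"
  by (simp add: fibre_def)

locale banach_fibration = scalar_field K
  for K :: "complex set" +
  fixes X :: "'x topology" and S :: "('x, 'e) fibred"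
  assumes banach_fibres: "banach_fibres K X S"
begin

lemma proj_image: "proj S ` carr S = topspace X"
  using banach_fibres unfolding banach_fibres_def by (rule conjunct1)

lemma proj_mem: "f \<in> carr S \<Longrightarrow> proj S f \<in> topspace X"
  using proj_image by blast

lemma normed_fibre_at: "x \<in> topspace X \<Longrightarrow> normed_fibre K (fibre S x) (fadd S) (fsmul S) (fnorm S) (fzero S x)"
  by (rule normed_fibre_of_banach_fibres[OF scalar_field_axioms banach_fibres])

lemma normed_fibre: "f \<in> carr S \<Longrightarrow>
    normed_fibre K (fibre S (proj S f)) (fadd S) (fsmul S) (fnorm S) (fzero S (proj S f))"
  using normed_fibre_at proj_mem by blast

lemma fibre_complete:
  assumes "x \<in> topspace X" and "\<And>n. u n \<in> fibre S x"
    and "\<forall>e > 0. \<exists>N. \<forall>m \<ge> N. \<forall>n \<ge> N. fnorm S (fsub S (u m) (u n)) < e"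
  shows "\<exists>f \<in> fibre S x. (\<lambda>n. fnorm S (fsub S (u n) f)) \<longlonglongrightarrow> 0"
  using banach_fibres assms unfolding banach_fibres_def by blast

lemma fzero_mem: "x \<in> topspace X \<Longrightarrow> fzero S x \<in> carr S \<and> proj S (fzero S x) = x"
  using normed_fibre.zero_closed[OF normed_fibre_at] by (simp add: fibre_iff)

lemma fnorm_fzero: "x \<in> topspace X \<Longrightarrow> fnorm S (fzero S x) = 0"
  using normed_fibre.nrm_zero[OF normed_fibre_at] .

lemma fadd_mem: "f \<in> carr S \<Longrightarrow> g \<in> carr S \<Longrightarrow> proj S g = proj S f \<Longrightarrow>
    fadd S f g \<in> carr S \<and> proj S (fadd S f g) = proj S f"
  using normed_fibre.add_closed[OF normed_fibre, of f f g] by (simp add: fibre_iff)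

lemma fsmul_mem: "c \<in> K \<Longrightarrow> f \<in> carr S \<Longrightarrow> fsmul S c f \<in> carr S \<and> proj S (fsmul S c f) = proj S f"
  using normed_fibre.smul_closed[OF normed_fibre, of f c f] by (simp add: fibre_iff)

lemma fsub_mem: "f \<in> carr S \<Longrightarrow> g \<in> carr S \<Longrightarrow> proj S g = proj S f \<Longrightarrow>
    fsub S f g \<in> carr S \<and> proj S (fsub S f g) = proj S f"
  using normed_fibre.sub_closed[OF normed_fibre, of f f g] by (simp add: fibre_iff fsub_def)

lemma fnorm_nonneg: "f \<in> carr S \<Longrightarrow> 0 \<le> fnorm S f"
  using normed_fibre.nrm_nonneg[OF normed_fibre, of f f] by (simp add: fibre_iff)

lemma fnorm_fsmul: "c \<in> K \<Longrightarrow> f \<in> carr S \<Longrightarrow> fnorm S (fsmul S c f) = cmod c * fnorm S f"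
  using normed_fibre.nrm_smul[OF normed_fibre, of f c f] by (simp add: fibre_iff)

lemma fnorm_fadd_le: "f \<in> carr S \<Longrightarrow> g \<in> carr S \<Longrightarrow> proj S g = proj S f \<Longrightarrow>
    fnorm S (fadd S f g) \<le> fnorm S f + fnorm S g"
  using normed_fibre.nrm_triangle[OF normed_fibre, of f f g] by (simp add: fibre_iff)

lemma fadd_fzero: "f \<in> carr S \<Longrightarrow> fadd S f (fzero S (proj S f)) = f"
  using normed_fibre.right_zero[OF normed_fibre, of f f] by (simp add: fibre_iff)

lemma fsub_fzero: "f \<in> carr S \<Longrightarrow> fsub S f (fzero S (proj S f)) = f"
  using normed_fibre.sub_zero[OF normed_fibre, of f f] by (simp add: fibre_iff fsub_def)

lemma fsmul_one: "f \<in> carr S \<Longrightarrow> fsmul S 1 f = f"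
  using normed_fibre.scale_one[OF normed_fibre, of f f] by (simp add: fibre_iff)

lemma fsmul_zero: "f \<in> carr S \<Longrightarrow> fsmul S 0 f = fzero S (proj S f)"
  using normed_fibre.zero_scale[OF normed_fibre, of f f] by (simp add: fibre_iff)

lemma fadd_fsub_cancel: "f \<in> carr S \<Longrightarrow> g \<in> carr S \<Longrightarrow> proj S g = proj S f \<Longrightarrow>
    fadd S f (fsub S g f) = g"
  using normed_fibre.add_sub_cancel[OF normed_fibre, of f f g] by (simp add: fibre_iff fsub_def)

lemma fnorm_fsub_commute: "f \<in> carr S \<Longrightarrow> g \<in> carr S \<Longrightarrow> proj S g = proj S f \<Longrightarrow>
    fnorm S (fsub S f g) = fnorm S (fsub S g f)"
  using normed_fibre.nrm_sub_commute[OF normed_fibre, of f f g] by (simp add: fibre_iff fsub_def)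

lemma fnorm_fsub_eq_0_iff: "f \<in> carr S \<Longrightarrow> g \<in> carr S \<Longrightarrow> proj S g = proj S f \<Longrightarrow>
    fnorm S (fsub S f g) = 0 \<longleftrightarrow> f = g"
  using normed_fibre.nrm_sub_eq_0_iff[OF normed_fibre, of f f g] by (simp add: fibre_iff fsub_def)

lemma fnorm_fsub_self: "f \<in> carr S \<Longrightarrow> fnorm S (fsub S f f) = 0"
  using fnorm_fsub_eq_0_iff by blast

lemma fnorm_fsub_triangle: "f \<in> carr S \<Longrightarrow> g \<in> carr S \<Longrightarrow> h \<in> carr S \<Longrightarrow>
    proj S g = proj S f \<Longrightarrow> proj S h = proj S f \<Longrightarrow>
    fnorm S (fsub S f h) \<le> fnorm S (fsub S f g) + fnorm S (fsub S g h)"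
  using normed_fibre.nrm_sub_triangle[OF normed_fibre, of f f g h] by (simp add: fibre_iff fsub_def)

lemma fnorm_fsub_le: "f \<in> carr S \<Longrightarrow> g \<in> carr S \<Longrightarrow> proj S g = proj S f \<Longrightarrow>
    fnorm S (fsub S f g) \<le> fnorm S f + fnorm S g"
  using normed_fibre.nrm_sub_le[OF normed_fibre, of f f g] by (simp add: fibre_iff fsub_def)

lemma fnorm_le_fnorm_fsub: "f \<in> carr S \<Longrightarrow> g \<in> carr S \<Longrightarrow> proj S g = proj S f \<Longrightarrow>
    fnorm S f \<le> fnorm S g + fnorm S (fsub S f g)"
  using normed_fibre.nrm_le_nrm_sub[OF normed_fibre, of f f g] by (simp add: fibre_iff fsub_def)

lemma fsub_fsmul_fsmul: "c \<in> K \<Longrightarrow> d \<in> K \<Longrightarrow> f \<in> carr S \<Longrightarrow>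
    fsub S (fsmul S c f) (fsmul S d f) = fsmul S (c - d) f"
  using normed_fibre.scale_diff[OF normed_fibre, of f c d f] by (simp add: fibre_iff fsub_def)

lemma fnorm_fsub_fsmul_fsmul: "c \<in> K \<Longrightarrow> d \<in> K \<Longrightarrow> f \<in> carr S \<Longrightarrow>
    fnorm S (fsub S (fsmul S c f) (fsmul S d f)) = cmod (c - d) * fnorm S f"
  using fsub_fsmul_fsmul fnorm_fsmul diff_mem by simp

lemma fzero_fball: "x \<in> topspace X \<Longrightarrow> fzero S x \<in> fball S n"
  using fzero_mem fnorm_fzero by (simp add: fball_def)

lemma proj_image_fball: "proj S ` fball S n = topspace X"
proof
  show "proj S ` fball S n \<subseteq> topspace X"
    by (auto simp: fball_def intro: proj_mem)
  show "topspace X \<subseteq> proj S ` fball S n"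
  proof
    fix x assume x: "x \<in> topspace X"
    have "fzero S x \<in> fball S n" by (rule fzero_fball[OF x])
    moreover have "x = proj S (fzero S x)" using fzero_mem[OF x] by simp
    ultimately show "x \<in> proj S ` fball S n" by (rule rev_image_eqI)
  qed
qed

lemma fball_complete:
  assumes x: "x \<in> topspace X" and u: "\<forall>k. u k \<in> fball S n \<and> proj S (u k) = x"
    and Cauchy: "\<forall>e>0. \<exists>N. \<forall>m\<ge>N. \<forall>k\<ge>N. fnorm S (fsub S (u m) (u k)) < e"
  shows "\<exists>f. f \<in> fball S n \<and> proj S f = x \<and> (\<lambda>k. fnorm S (fsub S (u k) f)) \<longlonglongrightarrow> 0"
proof -
  have "u k \<in> fibre S x" for k using u by (auto simp: fibre_def fball_def)
  then obtain f where "f \<in> fibre S x" and lim: "(\<lambda>k. fnorm S (fsub S (u k) f)) \<longlonglongrightarrow> 0"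
    using fibre_complete[OF x _ Cauchy] by blast
  then have f: "f \<in> carr S" "proj S f = x" by (auto simp: fibre_def)
  have "fnorm S f \<le> real n + 0"
  proof (rule LIMSEQ_le_const)
    show "(\<lambda>k. real n + fnorm S (fsub S (u k) f)) \<longlonglongrightarrow> real n + 0"
      by (intro tendsto_add tendsto_const lim)
    have "fnorm S f \<le> real n + fnorm S (fsub S (u k) f)" for k
    proof -
      have uk: "u k \<in> carr S" "fnorm S (u k) \<le> n" "proj S (u k) = proj S f"
        using u f by (auto simp: fball_def)
      have "fnorm S f \<le> fnorm S (u k) + fnorm S (fsub S f (u k))"
        using fnorm_le_fnorm_fsub[OF f(1) uk(1) uk(3)] .
      also have "fnorm S (fsub S f (u k)) = fnorm S (fsub S (u k) f)"
        using fnorm_fsub_commute[OF f(1) uk(1) uk(3)] .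
      finally show ?thesis using uk(2) by linarith
    qed
    then show "\<exists>N. \<forall>k\<ge>N. fnorm S f \<le> real n + fnorm S (fsub S (u k) f)" by blast
  qed
  then show ?thesis using f lim by (auto simp: fball_def)
qed

end

section \<open>Closed balls and the final topology\<close>

lemma fball_subset_carr: "fball S n \<subseteq> carr S"
  by (auto simp: fball_def)

lemma fball_mono: "n \<le> m \<Longrightarrow> fball S n \<subseteq> fball S m"
  by (auto simp: fball_def)

lemma exists_fball_interior: "f \<in> carr S \<Longrightarrow> \<exists>n\<ge>1. f \<in> fball S n \<and> fnorm S f < real n"
proof -
  assume f: "f \<in> carr S"
  obtain n :: nat where "fnorm S f < real n" using reals_Archimedean2 by blast
  then show ?thesis using f by (intro exI[of _ "max n 1"]) (auto simp: fball_def)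
qed

lemma fball_chain_Union:
  assumes sub: "\<And>j. E j \<subseteq> fball S (n + j)" and step: "\<And>j. E (Suc j) \<inter> fball S (n + j) = E j"
  shows "(\<Union>j. E j) \<inter> fball S (n + i) = E i"
proof -
  have restrict: "E j \<inter> fball S (n + i) = E i" if "i \<le> j" for i j
    using that
  proof (induction j)
    case 0 then show ?case using sub[of 0] by auto
  next
    case (Suc j)
    show ?case
    proof (cases "i = Suc j")
      case True then show ?thesis using sub[of "Suc j"] by auto
    next
      case False
      then have ij: "i \<le> j" using Suc.prems by simp
      then have "fball S (n + i) \<subseteq> fball S (n + j)" by (intro fball_mono) simp
      then have "E (Suc j) \<inter> fball S (n + i) = E (Suc j) \<inter> fball S (n + j) \<inter> fball S (n + i)" by blast
      also have "\<dots> = E i" using step[of j] Suc.IH[OF ij] by simp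
      finally show ?thesis .
    qed
  qed
  show ?thesis
  proof
    show "E i \<subseteq> (\<Union>j. E j) \<inter> fball S (n + i)" using sub[of i] by blast
    show "(\<Union>j. E j) \<inter> fball S (n + i) \<subseteq> E i"
    proof
      fix f assume "f \<in> (\<Union>j. E j) \<inter> fball S (n + i)"
      then obtain j where f: "f \<in> E j" "f \<in> fball S (n + i)" by blast
      show "f \<in> E i"
      proof (cases "j \<le> i")
        case True
        then have "E i \<inter> fball S (n + j) = E j" by (rule restrict)
        then show ?thesis using f by blast
      next
        case False
        then have "E j \<inter> fball S (n + i) = E i" by (intro restrict) simp
        then show ?thesis using f by blast
      qed
    qed
  qed
qed

lemma istopology_from_models:
  fixes T :: "nat \<Rightarrow> 'e topology"
  shows "istopology (\<lambda>U. U \<subseteq> carr S \<and> (\<forall>n\<ge>1. openin (T n) (U \<inter> topspace (T n))))"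
proof -
  have "A \<inter> B \<subseteq> carr S \<and> (\<forall>n\<ge>1. openin (T n) (A \<inter> B \<inter> topspace (T n)))"
    if A: "A \<subseteq> carr S \<and> (\<forall>n\<ge>1. openin (T n) (A \<inter> topspace (T n)))"
      and B: "B \<subseteq> carr S \<and> (\<forall>n\<ge>1. openin (T n) (B \<inter> topspace (T n)))" for A B
  proof (intro conjI allI impI)
    fix n :: nat assume "n \<ge> 1"
    moreover have "A \<inter> B \<inter> topspace (T n) = (A \<inter> topspace (T n)) \<inter> (B \<inter> topspace (T n))"
      by blast
    ultimately show "openin (T n) (A \<inter> B \<inter> topspace (T n))" using A B by (simp add: openin_Int)
  qed (use A in blast)
  moreover have "\<Union>\<U> \<subseteq> carr S \<and> (\<forall>n\<ge>1. openin (T n) (\<Union>\<U> \<inter> topspace (T n)))"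
    if \<U>: "\<forall>U\<in>\<U>. U \<subseteq> carr S \<and> (\<forall>n\<ge>1. openin (T n) (U \<inter> topspace (T n)))" for \<U>
  proof (intro conjI allI impI)
    show "\<Union>\<U> \<subseteq> carr S" using \<U> by blast
    fix n :: nat assume "n \<ge> 1"
    then have "\<forall>V\<in>(\<lambda>U. U \<inter> topspace (T n)) ` \<U>. openin (T n) V" using \<U> by blast
    moreover have "\<Union>\<U> \<inter> topspace (T n) = \<Union>((\<lambda>U. U \<inter> topspace (T n)) ` \<U>)" by blast
    ultimately show "openin (T n) (\<Union>\<U> \<inter> topspace (T n))" by (metis openin_Union)
  qed
  ultimately show ?thesis unfolding istopology_def by blast
qed

lemma openin_from_models:
  "openin (from_models S T) U \<longleftrightarrow> U \<subseteq> carr S \<and> (\<forall>n\<ge>1. openin (T n) (U \<inter> topspace (T n)))"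
  unfolding from_models_def topology_inverse'[OF istopology_from_models] ..

lemma topspace_from_models:
  assumes "\<And>n. n \<ge> 1 \<Longrightarrow> topspace (T n) \<subseteq> carr S"
  shows "topspace (from_models S T) = carr S"
proof
  show "topspace (from_models S T) \<subseteq> carr S"
    using openin_from_models[of S T "topspace (from_models S T)"] by simp
  have "openin (from_models S T) (carr S)"
    unfolding openin_from_models using assms by (simp add: Int_absorb1)
  then show "carr S \<subseteq> topspace (from_models S T)" by (rule openin_subset)
qed

section \<open>Bundles of complete metric spaces\<close>

lemma cm_bundleI:
  assumes "p ` topspace T = topspace X"
  and "\<And>x f g. x \<in> topspace X \<Longrightarrow> f \<in> topspace T \<Longrightarrow> g \<in> topspace T \<Longrightarrow> p f = x \<Longrightarrow> p g = x \<Longrightarrow>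
        0 \<le> d f g \<and> (d f g = 0 \<longleftrightarrow> f = g) \<and> d f g = d g f \<and> d f g \<le> k"
  and "\<And>x f g h. x \<in> topspace X \<Longrightarrow> f \<in> topspace T \<Longrightarrow> g \<in> topspace T \<Longrightarrow> h \<in> topspace T \<Longrightarrow>
        p f = x \<Longrightarrow> p g = x \<Longrightarrow> p h = x \<Longrightarrow> d f h \<le> d f g + d g h"
  and "\<And>x u. x \<in> topspace X \<Longrightarrow> (\<forall>n. u n \<in> topspace T \<and> p (u n) = x) \<Longrightarrow>
        (\<forall>e>0. \<exists>N. \<forall>m\<ge>N. \<forall>n\<ge>N. d (u m) (u n) < e) \<Longrightarrow>
        \<exists>f. f \<in> topspace T \<and> p f = x \<and> (\<lambda>n. d (u n) f) \<longlonglongrightarrow> 0"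
  and "\<And>r. openin (subtopology (prod_topology T T) (fibprod (topspace T) p))
              {(f, g) \<in> fibprod (topspace T) p. d f g < r}"
  and "continuous_map T X p" and "open_map T X p"
  and "\<And>W f. openin T W \<Longrightarrow> f \<in> W \<Longrightarrow> \<exists>V e. openin T V \<and> f \<in> V \<and> e > 0 \<and>
         V \<subseteq> {g \<in> topspace T. \<exists>h \<in> V. p g = p h \<and> d g h < e} \<and>
         {g \<in> topspace T. \<exists>h \<in> V. p g = p h \<and> d g h < e} \<subseteq> W"
  shows "cm_bundle X T p d k"
  unfolding cm_bundle_def Let_def
proof (intro conjI ballI allI impI)
  show "p ` topspace T = topspace X" by (rule assms(1))
  fix x assume x: "x \<in> topspace X"
  {
    fix f g assume "f \<in> {f \<in> topspace T. p f = x}" "g \<in> {f \<in> topspace T. p f = x}"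
    then show "0 \<le> d f g" "d f g = 0 \<longleftrightarrow> f = g" "d f g = d g f" "d f g \<le> k"
      using assms(2)[OF x, of f g] by auto
  }
  {
    fix f g h assume "f \<in> {f \<in> topspace T. p f = x}" "g \<in> {f \<in> topspace T. p f = x}" "h \<in> {f \<in> topspace T. p f = x}"
    then show "d f h \<le> d f g + d g h" using assms(3)[OF x, of f g h] by auto
  }
  fix u :: "nat \<Rightarrow> 'b"
  assume u: "(\<forall>n. u n \<in> {f \<in> topspace T. p f = x}) \<and> (\<forall>e>0. \<exists>N. \<forall>m\<ge>N. \<forall>n\<ge>N. d (u m) (u n) < e)"
  then obtain f where "f \<in> topspace T" "p f = x" "(\<lambda>n. d (u n) f) \<longlonglongrightarrow> 0"
    using assms(4)[OF x, of u] by auto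
  then show "\<exists>f\<in>{f \<in> topspace T. p f = x}. (\<lambda>n. d (u n) f) \<longlonglongrightarrow> 0" by blast
next
  fix r show "openin (subtopology (prod_topology T T) (fibprod (topspace T) p))
              {(f, g) \<in> fibprod (topspace T) p. d f g < r}" by (rule assms(5))
next
  show "continuous_map T X p" by (rule assms(6))
next
  show "open_map T X p" by (rule assms(7))
next
  fix W f assume "openin T W \<and> f \<in> W"
  then show "\<exists>V e. openin T V \<and> f \<in> V \<and> 0 < e \<and>
           V \<subseteq> {g \<in> topspace T. \<exists>h\<in>V. p g = p h \<and> d g h < e} \<and>
           {g \<in> topspace T. \<exists>h\<in>V. p g = p h \<and> d g h < e} \<subseteq> W"
    using assms(8) by blast
qed

lemma cm_bundleD:
  assumes "cm_bundle X T p d k"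
  shows cm_bundle_open_dist: "\<And>r. openin (subtopology (prod_topology T T) (fibprod (topspace T) p))
              {(f, g) \<in> fibprod (topspace T) p. d f g < r}"
    and cm_bundle_proj_continuous: "continuous_map T X p"
    and cm_bundle_proj_open: "open_map T X p"
    and cm_bundle_uniform_nbhd: "\<And>W f. openin T W \<Longrightarrow> f \<in> W \<Longrightarrow> \<exists>V e. openin T V \<and> f \<in> V \<and> e > 0 \<and>
           {g \<in> topspace T. \<exists>h \<in> V. p g = p h \<and> d g h < e} \<subseteq> W"
proof -
  have "(\<forall>r. openin (subtopology (prod_topology T T) (fibprod (topspace T) p))
              {(f, g) \<in> fibprod (topspace T) p. d f g < r}) \<and>
     continuous_map T X p \<and> open_map T X p \<and>
     (\<forall>W f. openin T W \<and> f \<in> W \<longrightarrow>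
        (\<exists>V e. openin T V \<and> f \<in> V \<and> e > 0 \<and>
           (let Ve = {g \<in> topspace T. \<exists>h \<in> V. p g = p h \<and> d g h < e} in V \<subseteq> Ve \<and> Ve \<subseteq> W)))"
    using assms unfolding cm_bundle_def by (elim conjE) (intro conjI; assumption)
  note parts = this[unfolded Let_def]
  show "openin (subtopology (prod_topology T T) (fibprod (topspace T) p))
      {(f, g) \<in> fibprod (topspace T) p. d f g < r}" for r
    using parts by blast
  show "continuous_map T X p" "open_map T X p"
    using parts by blast+
  show "\<exists>V e. openin T V \<and> f \<in> V \<and> e > 0 \<and>
      {g \<in> topspace T. \<exists>h \<in> V. p g = p h \<and> d g h < e} \<subseteq> W" if "openin T W" "f \<in> W" for W f
    using parts that by blast
qed

lemma cm_bundle_dist_nbhd: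
  assumes T: "cm_bundle X T p d k" and fg: "f \<in> topspace T" "g \<in> topspace T" "p f = p g" "d f g < e"
  obtains O1 O2 where "openin T O1" "openin T O2" "f \<in> O1" "g \<in> O2"
    "\<And>a b. a \<in> O1 \<Longrightarrow> b \<in> O2 \<Longrightarrow> p a = p b \<Longrightarrow> d a b < e"
proof -
  let ?FB = "fibprod (topspace T) p"
  obtain Q where Q: "openin (prod_topology T T) Q" "{(a, b) \<in> ?FB. d a b < e} = Q \<inter> ?FB"
    using cm_bundle_open_dist[OF T] unfolding openin_subtopology by blast
  have "(f, g) \<in> {(a, b) \<in> ?FB. d a b < e}" using fg by (simp add: fibprod_def)
  then have "(f, g) \<in> Q" by (simp only: Q(2) IntD1)
  then have "\<exists>O1 O2. openin T O1 \<and> openin T O2 \<and> f \<in> O1 \<and> g \<in> O2 \<and> O1 \<times> O2 \<subseteq> Q"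
    by (rule openin_prod_topology_alt[THEN iffD1, OF Q(1), rule_format])
  then obtain O1 O2 where O: "openin T O1" "openin T O2" "f \<in> O1" "g \<in> O2" "O1 \<times> O2 \<subseteq> Q"
    by blast
  show thesis
  proof (rule that[OF O(1-4)])
    fix a b assume ab: "a \<in> O1" "b \<in> O2" "p a = p b"
    then have "(a, b) \<in> ?FB" using openin_subset[OF O(1)] openin_subset[OF O(2)] by (auto simp: fibprod_def)
    moreover have "(a, b) \<in> Q" using ab O(5) by blast
    ultimately have "(a, b) \<in> Q \<inter> ?FB" by blast
    then have "(a, b) \<in> {(a, b) \<in> ?FB. d a b < e}" by (simp only: Q(2))
    then show "d a b < e" by simp
  qed
qed

section \<open>From Banach bundles to bundles of models\<close>

locale bundle_of_banach_spaces = scalar_field K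
  for K :: "complex set" +
  fixes X :: "'x topology" and S :: "('x, 'e) fibred" and TE :: "'e topology"
  assumes banach_bundle: "banach_bundle K X S TE"

sublocale bundle_of_banach_spaces \<subseteq> banach_fibration K X S
  using banach_bundle by unfold_locales (simp add: banach_bundle_def)

context bundle_of_banach_spaces
begin

lemma topspace_eq: "topspace TE = carr S"
  and proj_continuous: "continuous_map TE X (proj S)"
  and proj_open: "open_map TE X (proj S)"
  and fsmul_continuous: "continuous_map (prod_topology (top_of_set K) TE) TE (\<lambda>(c, f). fsmul S c f)"
  and fadd_continuous:
    "continuous_map (subtopology (prod_topology TE TE) (fibprod (carr S) (proj S))) TE (\<lambda>(f, g). fadd S f g)"
  and openin_fnorm_less: "openin TE {f \<in> carr S. fnorm S f < r}"
  and fzero_nbhd: "x \<in> topspace X \<Longrightarrow> openin TE W \<Longrightarrow> fzero S x \<in> W \<Longrightarrow>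
    \<exists>U r. openin X U \<and> x \<in> U \<and> r > 0 \<and> {f \<in> carr S. proj S f \<in> U \<and> fnorm S f < r} \<subseteq> W"
  using banach_bundle unfolding banach_bundle_def by blast+

lemma topspace_fibprod:
  "topspace (subtopology (prod_topology TE TE) (fibprod (carr S) (proj S))) = fibprod (carr S) (proj S)"
  by (auto simp: fibprod_def topspace_eq)

lemma openin_iff_fball:
  "openin TE U \<longleftrightarrow> U \<subseteq> carr S \<and> (\<forall>n\<ge>1. openin (subtopology TE (fball S n)) (U \<inter> fball S n))"
proof
  assume U: "openin TE U"
  then have "U \<subseteq> carr S" using openin_subset topspace_eq by metis
  moreover have "openin (subtopology TE (fball S n)) (U \<inter> fball S n)" for n
    using openin_subtopology_Int[OF U] .
  ultimately show "U \<subseteq> carr S \<and> (\<forall>n\<ge>1. openin (subtopology TE (fball S n)) (U \<inter> fball S n))"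
    by blast
next
  assume U: "U \<subseteq> carr S \<and> (\<forall>n\<ge>1. openin (subtopology TE (fball S n)) (U \<inter> fball S n))"
  show "openin TE U"
  proof (rule openin_subopen[THEN iffD2], rule ballI)
    fix f assume f: "f \<in> U"
    then have fS: "f \<in> carr S" using U by blast
    obtain n where n: "n \<ge> 1" "fnorm S f < real n"
      using exists_fball_interior[OF fS] by blast
    have "openin (subtopology TE (fball S n)) (U \<inter> fball S n)" using U n(1) by blast
    then obtain W where W: "openin TE W" "U \<inter> fball S n = W \<inter> fball S n"
      unfolding openin_subtopology by blast
    let ?B = "{g \<in> carr S. fnorm S g < real n}"
    have "?B \<subseteq> fball S n" by (auto simp: fball_def)
    then have "W \<inter> ?B \<subseteq> U" using W(2) by blast
    moreover have "f \<in> W \<inter> ?B"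
    proof -
      have "f \<in> fball S n" using fS n(2) by (simp add: fball_def)
      then have "f \<in> W" using W(2) f by blast
      then show ?thesis using fS n(2) by simp
    qed
    moreover have "openin TE (W \<inter> ?B)" using W(1) openin_fnorm_less by (rule openin_Int)
    ultimately show "\<exists>V. openin TE V \<and> f \<in> V \<and> V \<subseteq> U" by blast
  qed
qed

lemma from_models_to_models: "from_models S (to_models S TE) = TE"
proof (rule topology_eq[THEN iffD2], intro allI)
  fix U
  have "topspace (to_models S TE n) = fball S n" for n
    using topspace_eq by (auto simp: to_models_def fball_def)
  then show "openin (from_models S (to_models S TE)) U = openin TE U"
    unfolding openin_from_models openin_iff_fball[of U] by (simp add: to_models_def)
qed

lemma continuous_map_iff_fball:
  "continuous_map TE Y g \<longleftrightarrow> (\<forall>n\<ge>1. continuous_map (subtopology TE (fball S n)) Y g)"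
proof
  assume "continuous_map TE Y g"
  then show "\<forall>n\<ge>1. continuous_map (subtopology TE (fball S n)) Y g"
    by (simp add: continuous_map_from_subtopology)
next
  assume cont: "\<forall>n\<ge>1. continuous_map (subtopology TE (fball S n)) Y g"
  show "continuous_map TE Y g"
    unfolding continuous_map
  proof (intro conjI allI impI)
    show "g ` topspace TE \<subseteq> topspace Y"
    proof
      fix y assume "y \<in> g ` topspace TE"
      then obtain f where f: "f \<in> carr S" and y: "y = g f" using topspace_eq by blast
      obtain n where "n \<ge> 1" "f \<in> fball S n" using exists_fball_interior[of f S] f by blast
      then show "y \<in> topspace Y"
        using continuous_map_image_subset_topspace[of "subtopology TE (fball S n)" Y g] cont f y
        topspace_eq by auto
    qed
    fix V assume V: "openin Y V"
    show "openin TE {f \<in> topspace TE. g f \<in> V}"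
      unfolding openin_iff_fball
    proof (intro conjI allI impI)
      fix n :: nat assume "1 \<le> n"
      then have "continuous_map (subtopology TE (fball S n)) Y g" using cont by blast
      then have "openin (subtopology TE (fball S n)) {f \<in> topspace (subtopology TE (fball S n)). g f \<in> V}"
        using V by (rule openin_continuous_map_preimage)
      moreover have "{f \<in> topspace (subtopology TE (fball S n)). g f \<in> V} = {f \<in> topspace TE. g f \<in> V} \<inter> fball S n"
        by auto
      ultimately show "openin (subtopology TE (fball S n)) ({f \<in> topspace TE. g f \<in> V} \<inter> fball S n)"
        by simp
    qed (use topspace_eq in blast)
  qed
qed

lemma fsmul_continuous_scalar: "f \<in> carr S \<Longrightarrow> continuous_map (top_of_set K) TE (\<lambda>c. fsmul S c f)"
  using continuous_map_compose[OF _ fsmul_continuous, of _ "\<lambda>c. (c, f)"]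
  by (simp add: o_def continuous_map_pairedI topspace_eq)

lemma fsmul_continuous_vector: "c \<in> K \<Longrightarrow> continuous_map TE TE (fsmul S c)"
  using continuous_map_compose[OF _ fsmul_continuous, of _ "\<lambda>f. (c, f)"]
  by (simp add: o_def continuous_map_pairedI)

lemma fsub_continuous:
  "continuous_map (subtopology (prod_topology TE TE) (fibprod (carr S) (proj S))) TE (\<lambda>(f, g). fsub S f g)"
proof -
  let ?Z = "subtopology (prod_topology TE TE) (fibprod (carr S) (proj S))"
  have "continuous_map ?Z TE (\<lambda>p. fsmul S (-1) (snd p))"
    using continuous_map_from_subtopology[OF continuous_map_compose[OF continuous_map_snd[of TE TE]
          fsmul_continuous_vector[OF minus_one_mem]]]
    by (simp add: o_def)
  note neg_snd = this
  have "continuous_map ?Z ?Z (\<lambda>p. (fst p, fsmul S (-1) (snd p)))"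
    unfolding continuous_map_in_subtopology
  proof
    show "continuous_map ?Z (prod_topology TE TE) (\<lambda>p. (fst p, fsmul S (-1) (snd p)))"
      using continuous_map_from_subtopology[OF continuous_map_fst] neg_snd
      by (rule continuous_map_pairedI)
    show "(\<lambda>p. (fst p, fsmul S (-1) (snd p))) \<in> topspace ?Z \<rightarrow> fibprod (carr S) (proj S)"
    proof
      fix p assume "p \<in> topspace ?Z"
      then have "fst p \<in> carr S" "snd p \<in> carr S" "proj S (fst p) = proj S (snd p)"
        unfolding topspace_fibprod fibprod_def by auto
      then show "(fst p, fsmul S (-1) (snd p)) \<in> fibprod (carr S) (proj S)"
        using fsmul_mem[OF minus_one_mem, of "snd p"] by (simp add: fibprod_def)
    qed
  qed
  then have "continuous_map ?Z TE ((\<lambda>(f, g). fadd S f g) \<circ> (\<lambda>p. (fst p, fsmul S (-1) (snd p))))"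
    using fadd_continuous by (rule continuous_map_compose)
  moreover have "(\<lambda>(f, g). fadd S f g) \<circ> (\<lambda>p. (fst p, fsmul S (-1) (snd p))) = (\<lambda>(f, g). fsub S f g)"
    by (auto simp: fun_eq_iff fsub_def)
  ultimately show ?thesis by simp
qed

lemma fzero_continuous: "continuous_map X TE (fzero S)"
  unfolding continuous_map
proof (intro conjI allI impI)
  show "fzero S ` topspace X \<subseteq> topspace TE"
    using fzero_mem topspace_eq by (simp add: image_subset_iff)
  fix W assume W: "openin TE W"
  show "openin X {x \<in> topspace X. fzero S x \<in> W}"
  proof (rule openin_subopen[THEN iffD2], rule ballI)
    fix x assume x: "x \<in> {x \<in> topspace X. fzero S x \<in> W}"
    then obtain U r where U: "openin X U" "x \<in> U" "r > 0"
      "{f \<in> carr S. proj S f \<in> U \<and> fnorm S f < r} \<subseteq> W"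
      using fzero_nbhd[OF _ W] by blast
    have "fzero S y \<in> W" if "y \<in> U" for y
    proof -
      have y: "y \<in> topspace X" using openin_subset[OF U(1)] that by blast
      then have "fzero S y \<in> {f \<in> carr S. proj S f \<in> U \<and> fnorm S f < r}"
        using fzero_mem[OF y] fnorm_fzero[OF y] U(3) that by simp
      then show ?thesis using U(4) by blast
    qed
    then have "U \<subseteq> {x \<in> topspace X. fzero S x \<in> W}"
      using openin_subset[OF U(1)] by blast
    then show "\<exists>V. openin X V \<and> x \<in> V \<and> V \<subseteq> {x \<in> topspace X. fzero S x \<in> W}"
      using U(1,2) by blast
  qed
qed

lemma topspace_to_models: "topspace (to_models S TE n) = fball S n"
  using topspace_eq by (auto simp: to_models_def fball_def)

lemma prod_to_models: "subtopology (prod_topology (to_models S TE n) (to_models S TE m)) A =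
    subtopology (prod_topology TE TE) ((fball S n \<times> fball S m) \<inter> A)"
  unfolding to_models_def subtopology_Times[symmetric] subtopology_subtopology ..

lemma openin_fnorm_fsub_less:
  "openin (subtopology (prod_topology TE TE) (fibprod (carr S) (proj S)))
     {(f, g) \<in> fibprod (carr S) (proj S). fnorm S (fsub S f g) < r}"
proof -
  let ?Z = "subtopology (prod_topology TE TE) (fibprod (carr S) (proj S))"
  have "openin ?Z {p \<in> topspace ?Z. (\<lambda>(f, g). fsub S f g) p \<in> {f \<in> carr S. fnorm S f < r}}"
    using fsub_continuous openin_fnorm_less by (rule openin_continuous_map_preimage)
  moreover have "{p \<in> topspace ?Z. (\<lambda>(f, g). fsub S f g) p \<in> {f \<in> carr S. fnorm S f < r}} =
      {(f, g) \<in> fibprod (carr S) (proj S). fnorm S (fsub S f g) < r}"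
    unfolding topspace_fibprod using fsub_mem by (auto simp: fibprod_def)
  ultimately show ?thesis by simp
qed

lemma openin_fnorm_fsub_less_fball:
  "openin (subtopology (prod_topology (to_models S TE n) (to_models S TE n)) (fibprod (fball S n) (proj S)))
     {(f, g) \<in> fibprod (fball S n) (proj S). fnorm S (fsub S f g) < r}"
proof -
  have sub: "fibprod (fball S n) (proj S) \<subseteq> fibprod (carr S) (proj S)"
    by (auto simp: fibprod_def fball_def)
  have "openin (subtopology (subtopology (prod_topology TE TE) (fibprod (carr S) (proj S)))
      (fibprod (fball S n) (proj S)))
     (fibprod (fball S n) (proj S) \<inter> {(f, g) \<in> fibprod (carr S) (proj S). fnorm S (fsub S f g) < r})"
    using openin_fnorm_fsub_less by (rule openin_subtopology_Int2)
  moreover have "fibprod (fball S n) (proj S) \<inter> {(f, g) \<in> fibprod (carr S) (proj S). fnorm S (fsub S f g) < r}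
      = {(f, g) \<in> fibprod (fball S n) (proj S). fnorm S (fsub S f g) < r}"
    using sub by blast
  moreover have "(fball S n \<times> fball S n) \<inter> fibprod (fball S n) (proj S) = fibprod (fball S n) (proj S)"
    by (auto simp: fibprod_def)
  ultimately show ?thesis
    unfolding prod_to_models subtopology_subtopology using sub by (simp add: Int_absorb1)
qed

lemma exists_shrink_in_open:
  assumes W: "openin TE W" and f: "f \<in> W"
  shows "\<exists>t. 0 < t \<and> t < 1 \<and> fsmul S (complex_of_real t) f \<in> W"
proof -
  have fS: "f \<in> carr S" using openin_subset[OF W] f topspace_eq by blast
  have "openin (top_of_set K) {c \<in> topspace (top_of_set K). fsmul S c f \<in> W}"
    using fsmul_continuous_scalar[OF fS] W by (rule openin_continuous_map_preimage)
  moreover have "1 \<in> {c \<in> K. fsmul S c f \<in> W}"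
    using fsmul_one[OF fS] f one_mem by simp
  ultimately obtain e where e: "e > 0" "ball 1 e \<inter> K \<subseteq> {c \<in> K. fsmul S c f \<in> W}"
    unfolding openin_contains_ball by auto
  define t :: real where "t = max (1/2) (1 - e/2)"
  have t: "0 < t" "t < 1" using e(1) by (auto simp: t_def)
  have "dist (1::complex) (complex_of_real t) = dist (1::real) t"
    using dist_of_real[of "1::real" t] by simp
  also have "\<dots> < e" using e(1) by (auto simp: t_def dist_real_def max_def)
  finally have "complex_of_real t \<in> ball 1 e \<inter> K" using of_real_mem by simp
  then show ?thesis using e(2) t by blast
qed

lemma proj_open_map_to_models:
  assumes n: "n \<ge> 1"
  shows "open_map (to_models S TE n) X (proj S)"
  unfolding open_map_def
proof (intro allI impI)
  fix W assume "openin (to_models S TE n) W"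
  then obtain W0 where W0: "openin TE W0" "W = W0 \<inter> fball S n"
    unfolding to_models_def openin_subtopology by blast
  show "openin X (proj S ` W)"
  proof (rule openin_subopen[THEN iffD2], rule ballI)
    fix x assume "x \<in> proj S ` W"
    then obtain f where fW: "f \<in> W" and xf: "x = proj S f" by blast
    have fS: "f \<in> carr S" and fn: "fnorm S f \<le> n" using fW W0(2) by (auto simp: fball_def)
    \<comment> \<open>shrinking f moves it into the open ball, where W looks like the open set W0\<close>
    obtain t where t: "0 < t" "t < 1" "fsmul S (complex_of_real t) f \<in> W0"
      using exists_shrink_in_open[OF W0(1)] fW W0(2) by blast
    let ?g = "fsmul S (complex_of_real t) f"
    have g: "?g \<in> carr S" "proj S ?g = proj S f" using fsmul_mem[OF of_real_mem fS] by auto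
    have "fnorm S ?g = t * fnorm S f" using fnorm_fsmul[OF of_real_mem fS] t by simp
    also have "\<dots> \<le> t * n" using fn t by (simp add: mult_left_mono)
    also have "\<dots> < n" using t n by simp
    finally have gn: "fnorm S ?g < n" .
    let ?N = "W0 \<inter> {h \<in> carr S. fnorm S h < n}"
    have "openin TE ?N" using W0(1) openin_fnorm_less by (rule openin_Int)
    then have "openin X (proj S ` ?N)" using proj_open unfolding open_map_def by blast
    moreover have "x \<in> proj S ` ?N"
      using t(3) g gn xf by (intro image_eqI[where x="?g"]) auto
    moreover have "proj S ` ?N \<subseteq> proj S ` W" using W0(2) by (auto simp: fball_def)
    ultimately show "\<exists>V. openin X V \<and> x \<in> V \<and> V \<subseteq> proj S ` W" by blast
  qed
qed

lemma fadd_small_nbhd: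
  assumes W: "openin TE W" and fW: "f \<in> W"
  obtains V U r where "openin TE V" "f \<in> V" "openin X U" "proj S f \<in> U" "r > 0"
    "\<And>h k. h \<in> V \<Longrightarrow> k \<in> carr S \<Longrightarrow> proj S k = proj S h \<Longrightarrow> proj S h \<in> U \<Longrightarrow> fnorm S k < r \<Longrightarrow>
       fadd S h k \<in> W"
proof -
  let ?Z = "subtopology (prod_topology TE TE) (fibprod (carr S) (proj S))"
  define x where "x = proj S f"
  have fS: "f \<in> carr S" using openin_subset[OF W] fW topspace_eq by blast
  then have x: "x \<in> topspace X" unfolding x_def by (rule proj_mem)
  have "openin ?Z {p \<in> topspace ?Z. (\<lambda>(f, g). fadd S f g) p \<in> W}"
    using fadd_continuous W by (rule openin_continuous_map_preimage)
  then obtain Q where Q: "openin (prod_topology TE TE) Q"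
    "{p \<in> topspace ?Z. (\<lambda>(f, g). fadd S f g) p \<in> W} = Q \<inter> fibprod (carr S) (proj S)"
    unfolding openin_subtopology by blast
  have "(f, fzero S x) \<in> fibprod (carr S) (proj S)"
    using fzero_mem[OF x] fS x_def by (simp add: fibprod_def)
  moreover have "fadd S f (fzero S x) \<in> W" using fadd_fzero[OF fS] fW x_def by simp
  ultimately have "(f, fzero S x) \<in> {p \<in> topspace ?Z. (\<lambda>(f, g). fadd S f g) p \<in> W}"
    unfolding topspace_fibprod by simp
  then have "(f, fzero S x) \<in> Q \<inter> fibprod (carr S) (proj S)" by (simp only: Q(2)[symmetric])
  then have "(f, fzero S x) \<in> Q" by blast
  then have "\<exists>O1 O2. openin TE O1 \<and> openin TE O2 \<and> f \<in> O1 \<and> fzero S x \<in> O2 \<and> O1 \<times> O2 \<subseteq> Q"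
    by (rule openin_prod_topology_alt[THEN iffD1, OF Q(1), rule_format])
  then obtain O1 O2 where O: "openin TE O1" "openin TE O2" "f \<in> O1" "fzero S x \<in> O2" "O1 \<times> O2 \<subseteq> Q"
    by blast
  obtain U r where U: "openin X U" "x \<in> U" "r > 0"
    "{k \<in> carr S. proj S k \<in> U \<and> fnorm S k < r} \<subseteq> O2"
    using fzero_nbhd[OF x O(2,4)] by blast
  show thesis
  proof (rule that[OF O(1,3) U(1) _ U(3)])
    show "proj S f \<in> U" using U(2) x_def by simp
    fix h k assume h: "h \<in> O1" and k: "k \<in> carr S" "proj S k = proj S h" "proj S h \<in> U" "fnorm S k < r"
    have "k \<in> {k \<in> carr S. proj S k \<in> U \<and> fnorm S k < r}" using k by simp
    then have "k \<in> O2" using U(4) by blast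
    then have "(h, k) \<in> Q" using O(5) h by blast
    moreover have "h \<in> carr S" using openin_subset[OF O(1)] h topspace_eq by blast
    then have "(h, k) \<in> fibprod (carr S) (proj S)" using k by (simp add: fibprod_def)
    ultimately have "(h, k) \<in> Q \<inter> fibprod (carr S) (proj S)" by blast
    then have "(h, k) \<in> {p \<in> topspace ?Z. (\<lambda>(f, g). fadd S f g) p \<in> W}"
      by (simp only: Q(2))
    then show "fadd S h k \<in> W" by simp
  qed
qed

lemma to_models_uniform_nbhd:
  assumes W: "openin (to_models S TE n) W" and fW: "f \<in> W"
  shows "\<exists>V e. openin (to_models S TE n) V \<and> f \<in> V \<and> e > 0 \<and>
    V \<subseteq> {g \<in> fball S n. \<exists>h \<in> V. proj S g = proj S h \<and> fnorm S (fsub S g h) < e} \<and>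
    {g \<in> fball S n. \<exists>h \<in> V. proj S g = proj S h \<and> fnorm S (fsub S g h) < e} \<subseteq> W"
proof -
  obtain W0 where W0: "openin TE W0" "W = W0 \<inter> fball S n"
    using W unfolding to_models_def openin_subtopology by blast
  \<comment> \<open>V_r \<subseteq> W: write g = h + (g - h) with g - h small, and use continuity of addition at (f, 0)\<close>
  obtain V0 U r where V0: "openin TE V0" "f \<in> V0" "openin X U" "proj S f \<in> U" "r > 0"
    and small: "\<And>h k. h \<in> V0 \<Longrightarrow> k \<in> carr S \<Longrightarrow> proj S k = proj S h \<Longrightarrow> proj S h \<in> U \<Longrightarrow>
       fnorm S k < r \<Longrightarrow> fadd S h k \<in> W0"
    using fadd_small_nbhd[OF W0(1)] fW W0(2) by blast
  let ?V = "(V0 \<inter> {h \<in> topspace TE. proj S h \<in> U}) \<inter> fball S n"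
  let ?Vr = "{g \<in> fball S n. \<exists>h \<in> ?V. proj S g = proj S h \<and> fnorm S (fsub S g h) < r}"
  have "openin TE {h \<in> topspace TE. proj S h \<in> U}"
    using proj_continuous V0(3) by (rule openin_continuous_map_preimage)
  then have "openin (to_models S TE n) ?V"
    unfolding to_models_def using V0(1) by (intro openin_subtopology_Int openin_Int)
  moreover have "f \<in> ?V" using V0(2,4) fW by (simp add: W0(2) topspace_eq fball_def)
  moreover have "?V \<subseteq> ?Vr"
  proof
    fix h assume h: "h \<in> ?V"
    then have "h \<in> fball S n" by blast
    moreover from this have "fnorm S (fsub S h h) < r"
      using fnorm_fsub_self V0(5) by (simp add: fball_def)
    ultimately show "h \<in> ?Vr" using h by blast
  qed
  moreover have "?Vr \<subseteq> W"
  proof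
    fix g assume "g \<in> ?Vr"
    then obtain h where g: "g \<in> fball S n" and h: "h \<in> ?V" and pgh: "proj S g = proj S h"
      and d: "fnorm S (fsub S g h) < r" by blast
    have gS: "g \<in> carr S" and hS: "h \<in> carr S" using g h by (simp_all add: fball_def)
    have k: "fsub S g h \<in> carr S" "proj S (fsub S g h) = proj S h"
      using fsub_mem[OF gS hS] pgh by simp_all
    have "h \<in> V0" "proj S h \<in> U" using h by simp_all
    then have "fadd S h (fsub S g h) \<in> W0" using small[OF _ k] d by blast
    moreover have "fadd S h (fsub S g h) = g" using fadd_fsub_cancel[OF hS gS] pgh by simp
    ultimately show "g \<in> W" using g by (simp add: W0(2))
  qed
  ultimately show ?thesis using V0(5) by blast
qed

lemma cm_bundle_to_models:
  assumes n: "n \<ge> 1"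
  shows "cm_bundle X (to_models S TE n) (proj S) (\<lambda>f g. fnorm S (fsub S f g)) (2 * real n)"
proof (rule cm_bundleI, unfold topspace_to_models)
  show "proj S ` fball S n = topspace X" by (rule proj_image_fball)
next
  fix x f g assume "f \<in> fball S n" "g \<in> fball S n" "proj S f = x" "proj S g = x"
  then have f: "f \<in> carr S" "fnorm S f \<le> n" and g: "g \<in> carr S" "fnorm S g \<le> n"
    and pg: "proj S g = proj S f" by (auto simp: fball_def)
  show "0 \<le> fnorm S (fsub S f g) \<and> (fnorm S (fsub S f g) = 0) = (f = g) \<and>
    fnorm S (fsub S f g) = fnorm S (fsub S g f) \<and> fnorm S (fsub S f g) \<le> 2 * real n"
    using fnorm_nonneg[OF fsub_mem[OF f(1) g(1) pg, THEN conjunct1]]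
      fnorm_fsub_eq_0_iff[OF f(1) g(1) pg] fnorm_fsub_commute[OF f(1) g(1) pg]
      fnorm_fsub_le[OF f(1) g(1) pg] f(2) g(2)
    by linarith
next
  fix x f g h assume "f \<in> fball S n" "g \<in> fball S n" "h \<in> fball S n"
    "proj S f = x" "proj S g = x" "proj S h = x"
  then show "fnorm S (fsub S f h) \<le> fnorm S (fsub S f g) + fnorm S (fsub S g h)"
    using fnorm_fsub_triangle[of f g h] by (simp add: fball_def)
next
  fix x and u :: "nat \<Rightarrow> 'e" assume "x \<in> topspace X" "\<forall>k. u k \<in> fball S n \<and> proj S (u k) = x"
    "\<forall>e>0. \<exists>N. \<forall>m\<ge>N. \<forall>k\<ge>N. fnorm S (fsub S (u m) (u k)) < e"
  then show "\<exists>f. f \<in> fball S n \<and> proj S f = x \<and> (\<lambda>k. fnorm S (fsub S (u k) f)) \<longlonglongrightarrow> 0"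
    by (rule fball_complete)
next
  show "openin (subtopology (prod_topology (to_models S TE n) (to_models S TE n)) (fibprod (fball S n) (proj S)))
     {(f, g) \<in> fibprod (fball S n) (proj S). fnorm S (fsub S f g) < r}" for r
    by (rule openin_fnorm_fsub_less_fball)
next
  show "continuous_map (to_models S TE n) X (proj S)"
    unfolding to_models_def by (rule continuous_map_from_subtopology[OF proj_continuous])
next
  show "open_map (to_models S TE n) X (proj S)" using n by (rule proj_open_map_to_models)
next
  fix W f assume "openin (to_models S TE n) W" "f \<in> W"
  then show "\<exists>V e. openin (to_models S TE n) V \<and> f \<in> V \<and> e > 0 \<and>
      V \<subseteq> {g \<in> fball S n. \<exists>h \<in> V. proj S g = proj S h \<and> fnorm S (fsub S g h) < e} \<and>
      {g \<in> fball S n. \<exists>h \<in> V. proj S g = proj S h \<and> fnorm S (fsub S g h) < e} \<subseteq> W"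
    by (rule to_models_uniform_nbhd)
qed

lemma fadd_continuous_to_models:
  "continuous_map (subtopology (prod_topology (to_models S TE n) (to_models S TE m)) (fibprod (carr S) (proj S)))
     (to_models S TE (n + m)) (\<lambda>(f, g). fadd S f g)"
proof -
  let ?A = "(fball S n \<times> fball S m) \<inter> fibprod (carr S) (proj S)"
  have "continuous_map (subtopology (prod_topology TE TE) ?A) TE (\<lambda>(f, g). fadd S f g)"
    using fadd_continuous by (rule continuous_map_from_subtopology_mono) blast
  moreover have "(\<lambda>(f, g). fadd S f g) \<in> topspace (subtopology (prod_topology TE TE) ?A) \<rightarrow> fball S (n + m)"
  proof
    fix p assume "p \<in> topspace (subtopology (prod_topology TE TE) ?A)"
    then obtain f g where p: "p = (f, g)" "f \<in> carr S" "g \<in> carr S" "proj S g = proj S f"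
      "fnorm S f \<le> n" "fnorm S g \<le> m"
      by (cases p) (auto simp: fibprod_def fball_def)
    then show "(\<lambda>(f, g). fadd S f g) p \<in> fball S (n + m)"
      using fnorm_fadd_le[OF p(2-4)] fadd_mem[OF p(2-4)] by (simp add: fball_def)
  qed
  ultimately show ?thesis
    unfolding prod_to_models unfolding to_models_def continuous_map_in_subtopology by blast
qed

lemma fsmul_continuous_to_models:
  assumes c: "c \<in> K"
  shows "continuous_map (to_models S TE n) (to_models S TE (nat \<lceil>cmod c * real n\<rceil>)) (fsmul S c)"
proof -
  have "fsmul S c \<in> topspace (subtopology TE (fball S n)) \<rightarrow> fball S (nat \<lceil>cmod c * real n\<rceil>)"
  proof
    fix f assume "f \<in> topspace (subtopology TE (fball S n))"
    then have f: "f \<in> carr S" "fnorm S f \<le> n" by (simp_all add: topspace_eq fball_def)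
    have "fnorm S (fsmul S c f) = cmod c * fnorm S f" using fnorm_fsmul[OF c f(1)] .
    also have "\<dots> \<le> cmod c * n" using f(2) by (simp add: mult_left_mono)
    also have "\<dots> \<le> real (nat \<lceil>cmod c * real n\<rceil>)" by (rule real_nat_ceiling_ge)
    finally show "fsmul S c f \<in> fball S (nat \<lceil>cmod c * real n\<rceil>)"
      using fsmul_mem[OF c f(1)] by (simp add: fball_def)
  qed
  then show ?thesis
    unfolding to_models_def continuous_map_in_subtopology
    using continuous_map_from_subtopology[OF fsmul_continuous_vector[OF c]] by blast
qed

lemma model_bundle_to_models: "model_bundle K X S (to_models S TE)"
  unfolding model_bundle_def
proof (intro conjI allI impI ballI)
  fix n m :: nat assume "1 \<le> n \<and> n < m"
  then have "fball S n \<subseteq> fball S m" by (intro fball_mono) simp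
  then show "continuous_map (to_models S TE n) (to_models S TE m) id"
    unfolding to_models_def continuous_map_in_subtopology
    by (auto intro: continuous_map_from_subtopology continuous_map_id)
next
  have "fzero S \<in> topspace X \<rightarrow> fball S 1" by (intro Pi_I fzero_fball)
  then show "continuous_map X (to_models S TE 1) (fzero S)"
    unfolding to_models_def continuous_map_in_subtopology using fzero_continuous by blast
qed (simp_all add: banach_fibres topspace_to_models cm_bundle_to_models fadd_continuous_to_models
      fsmul_continuous_to_models)

end

section \<open>From bundles of models to Banach bundles\<close>

locale bundle_of_models = scalar_field K
  for K :: "complex set" +
  fixes X :: "'x topology" and S :: "('x, 'e) fibred" and T :: "nat \<Rightarrow> 'e topology"
  assumes model_bundle: "model_bundle K X S T"

sublocale bundle_of_models \<subseteq> banach_fibration K X S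
  using model_bundle by unfold_locales (simp add: model_bundle_def)

context bundle_of_models
begin

lemma topspace_sort: "n \<ge> 1 \<Longrightarrow> topspace (T n) = fball S n"
  and cm_bundle_sort: "n \<ge> 1 \<Longrightarrow> cm_bundle X (T n) (proj S) (\<lambda>f g. fnorm S (fsub S f g)) (2 * real n)"
  and inclusion_continuous: "1 \<le> n \<Longrightarrow> n < m \<Longrightarrow> continuous_map (T n) (T m) id"
  and fadd_continuous_sort: "1 \<le> n \<Longrightarrow> 1 \<le> m \<Longrightarrow>
    continuous_map (subtopology (prod_topology (T n) (T m)) (fibprod (carr S) (proj S)))
      (T (n + m)) (\<lambda>(f, g). fadd S f g)"
  and fsmul_continuous_sort: "c \<in> K \<Longrightarrow> c \<noteq> 0 \<Longrightarrow> n \<ge> 1 \<Longrightarrow>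
    continuous_map (T n) (T (nat \<lceil>cmod c * real n\<rceil>)) (fsmul S c)"
  and fzero_continuous_sort: "continuous_map X (T 1) (fzero S)"
  using model_bundle unfolding model_bundle_def by blast+

lemma inclusion_continuous_le: "1 \<le> n \<Longrightarrow> n \<le> m \<Longrightarrow> continuous_map (T n) (T m) id"
  using inclusion_continuous[of n m] by (cases "n = m") auto

lemma openin_sort_restrict:
  assumes "1 \<le> n" "n \<le> m" "openin (T m) G"
  shows "openin (T n) (G \<inter> fball S n)"
proof -
  have "openin (T n) {f \<in> topspace (T n). id f \<in> G}"
    using inclusion_continuous_le[OF assms(1,2)] assms(3) by (rule openin_continuous_map_preimage)
  moreover have "{f \<in> topspace (T n). id f \<in> G} = G \<inter> fball S n"
    using topspace_sort[OF assms(1)] by auto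
  ultimately show ?thesis by simp
qed

lemma fzero_continuous_sort_le: "n \<ge> 1 \<Longrightarrow> continuous_map X (T n) (fzero S)"
  using continuous_map_compose[OF fzero_continuous_sort inclusion_continuous_le[of 1 n]]
  by (simp add: o_def)

lemma proj_continuous_sort: "n \<ge> 1 \<Longrightarrow> continuous_map (T n) X (proj S)"
  using cm_bundle_proj_continuous[OF cm_bundle_sort] .

lemma fsmul_continuous_sort_le:
  assumes c: "c \<in> K" and n: "1 \<le> n" and M: "1 \<le> M" and le: "cmod c * real n \<le> real M"
  shows "continuous_map (T n) (T M) (fsmul S c)"
proof (cases "c = 0")
  case True
  have "continuous_map (T n) (T M) (fzero S \<circ> proj S)"
    using proj_continuous_sort[OF n] fzero_continuous_sort_le[OF M] by (rule continuous_map_compose)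
  then show ?thesis
  proof (rule continuous_map_eq)
    fix g assume "g \<in> topspace (T n)"
    then have "g \<in> carr S" using topspace_sort[OF n] by (simp add: fball_def)
    then show "(fzero S \<circ> proj S) g = fsmul S c g" using fsmul_zero True by simp
  qed
next
  case False
  let ?k = "nat \<lceil>cmod c * real n\<rceil>"
  have "0 < cmod c * real n" using False n by simp
  then have k: "1 \<le> ?k" by linarith
  have "?k \<le> nat \<lceil>real M\<rceil>" using le by (intro nat_mono ceiling_mono)
  then have "?k \<le> M" by simp
  with fsmul_continuous_sort[OF c False n] show ?thesis
    using continuous_map_compose[OF _ inclusion_continuous_le[OF k]] by fastforce
qed

lemma openin_fnorm_less_sort:
  assumes n: "n \<ge> 1"
  shows "openin (T n) {f \<in> fball S n. fnorm S f < r}"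
proof -
  let ?FB = "fibprod (topspace (T n)) (proj S)"
  let ?to_zero = "\<lambda>f. (f, fzero S (proj S f))"
  have to_zero_mem: "?to_zero f \<in> ?FB" if "f \<in> fball S n" for f
  proof -
    have fS: "f \<in> carr S" using that by (simp add: fball_def)
    then have "fzero S (proj S f) \<in> fball S n" by (rule fzero_fball[OF proj_mem])
    then show ?thesis using that fzero_mem[OF proj_mem[OF fS]] topspace_sort[OF n]
      by (simp add: fibprod_def)
  qed
  \<comment> \<open>the norm is the distance to the zero of the fibre, and the zero section is continuous\<close>
  have "continuous_map (T n) (T n) (\<lambda>f. fzero S (proj S f))"
    using continuous_map_compose[OF proj_continuous_sort[OF n] fzero_continuous_sort_le[OF n]]
    by (simp add: o_def)
  then have "continuous_map (T n) (prod_topology (T n) (T n)) ?to_zero"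
    by (intro continuous_map_pairedI continuous_map_id[unfolded id_def])
  then have "continuous_map (T n) (subtopology (prod_topology (T n) (T n)) ?FB) ?to_zero"
    unfolding continuous_map_in_subtopology using to_zero_mem topspace_sort[OF n] by simp
  then have "openin (T n) {f \<in> topspace (T n). ?to_zero f \<in> {(f, g) \<in> ?FB. fnorm S (fsub S f g) < r}}"
    using cm_bundle_open_dist[OF cm_bundle_sort[OF n]] by (rule openin_continuous_map_preimage)
  moreover have "{f \<in> topspace (T n). ?to_zero f \<in> {(f, g) \<in> ?FB. fnorm S (fsub S f g) < r}} =
      {f \<in> fball S n. fnorm S f < r}"
    using to_zero_mem fsub_fzero topspace_sort[OF n] by (auto simp: fball_def)
  ultimately show ?thesis by simp
qed

lemma open_sort_extension_at:
  assumes n: "1 \<le> n" and nm: "n \<le> m" and U: "openin (T n) U" and fU: "f \<in> U"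
  shows "\<exists>G. openin (T m) G \<and> f \<in> G \<and> G \<inter> fball S n \<subseteq> U"
proof -
  have m: "1 \<le> m" using n nm by simp
  have fn: "f \<in> fball S n" using openin_subset[OF U] fU topspace_sort[OF n] by blast
  then have fm: "f \<in> topspace (T m)" using fball_mono[OF nm, of S] topspace_sort[OF m] by blast
  have fS: "f \<in> carr S" using fn by (simp add: fball_def)
  obtain V e where V: "openin (T n) V" "f \<in> V" "e > 0"
    and Ve: "{g \<in> topspace (T n). \<exists>h \<in> V. proj S g = proj S h \<and> fnorm S (fsub S g h) < e} \<subseteq> U"
    using cm_bundle_uniform_nbhd[OF cm_bundle_sort[OF n] U fU] by blast
  obtain O1 O2 where O: "openin (T m) O1" "openin (T m) O2" "f \<in> O1" "f \<in> O2"
    and close: "\<And>a b. a \<in> O1 \<Longrightarrow> b \<in> O2 \<Longrightarrow> proj S a = proj S b \<Longrightarrow> fnorm S (fsub S a b) < e"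
    using cm_bundle_dist_nbhd[OF cm_bundle_sort[OF m] fm fm] fnorm_fsub_self[OF fS] V(3) by auto
  let ?V' = "V \<inter> (O2 \<inter> fball S n)"
  have "openin (T n) ?V'" using V(1) openin_sort_restrict[OF n nm O(2)] by (rule openin_Int)
  then have P: "openin X (proj S ` ?V')"
    using cm_bundle_proj_open[OF cm_bundle_sort[OF n]] unfolding open_map_def by blast
  let ?G = "O1 \<inter> {a \<in> topspace (T m). proj S a \<in> proj S ` ?V'}"
  have "openin (T m) ?G"
    using O(1) openin_continuous_map_preimage[OF proj_continuous_sort[OF m] P] by (rule openin_Int)
  moreover have "f \<in> ?G" using O(3,4) V(2) fn fm by auto
  \<comment> \<open>a point of G in the n-th sort is e-close to a point of V in its own fibre, so lies in V_e\<close>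
  moreover have "?G \<inter> fball S n \<subseteq> U"
  proof
    fix a assume a: "a \<in> ?G \<inter> fball S n"
    then obtain h where h: "h \<in> ?V'" "proj S a = proj S h" by auto
    then have "fnorm S (fsub S a h) < e" using close a by blast
    then have "a \<in> {g \<in> topspace (T n). \<exists>h \<in> V. proj S g = proj S h \<and> fnorm S (fsub S g h) < e}"
      using a h topspace_sort[OF n] by auto
    then show "a \<in> U" using Ve by blast
  qed
  ultimately show ?thesis by blast
qed

lemma open_sort_extension:
  assumes n: "1 \<le> n" and nm: "n \<le> m" and U: "openin (T n) U"
  shows "\<exists>G. openin (T m) G \<and> G \<inter> fball S n = U"
proof -
  obtain G where G: "\<And>f. f \<in> U \<Longrightarrow> openin (T m) (G f) \<and> f \<in> G f \<and> G f \<inter> fball S n \<subseteq> U"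
    using open_sort_extension_at[OF n nm U] by metis
  have "U \<subseteq> fball S n" using openin_subset[OF U] topspace_sort[OF n] by simp
  then have "(\<Union>f\<in>U. G f) \<inter> fball S n = U" using G by blast
  moreover have "openin (T m) (\<Union>f\<in>U. G f)" using G by blast
  ultimately show ?thesis by blast
qed

lemma openin_from_models_iff:
  "openin (from_models S T) U \<longleftrightarrow> U \<subseteq> carr S \<and> (\<forall>n\<ge>1. openin (T n) (U \<inter> fball S n))"
  unfolding openin_from_models by (simp add: topspace_sort)

lemma topspace_from_models_eq: "topspace (from_models S T) = carr S"
  by (rule topspace_from_models) (simp add: topspace_sort fball_subset_carr)

lemma open_sort_chain:
  assumes n: "1 \<le> n" and U: "openin (T n) U"
  obtains E where "E 0 = U" "\<And>j. openin (T (n + j)) (E j)" "\<And>j. E (Suc j) \<inter> fball S (n + j) = E j"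
proof -
  have "\<exists>E. \<forall>j. (openin (T (n + j)) (E j) \<and> (j = 0 \<longrightarrow> E j = U)) \<and> E (Suc j) \<inter> fball S (n + j) = E j"
  proof (rule dependent_nat_choice)
    fix G j assume "openin (T (n + j)) G \<and> (j = 0 \<longrightarrow> G = U)"
    then show "\<exists>G'. (openin (T (n + Suc j)) G' \<and> (Suc j = 0 \<longrightarrow> G' = U)) \<and> G' \<inter> fball S (n + j) = G"
      using open_sort_extension[of "n + j" "n + Suc j" G] n by simp
  qed (use U in simp)
  then show thesis using that by blast
qed

lemma open_from_models_extension:
  assumes n: "1 \<le> n" and U: "openin (T n) U"
  shows "\<exists>V. openin (from_models S T) V \<and> V \<inter> fball S n = U"
proof -
  obtain E where E0: "E 0 = U" and E: "\<And>j. openin (T (n + j)) (E j)"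
    and step: "\<And>j. E (Suc j) \<inter> fball S (n + j) = E j"
    using open_sort_chain[OF n U] by blast
  have sub: "E j \<subseteq> fball S (n + j)" for j
    using openin_subset[OF E[of j]] topspace_sort[of "n + j"] n by simp
  note restrict = fball_chain_Union[OF sub step]
  let ?V = "\<Union>j. E j"
  have "openin (T k) (?V \<inter> fball S k)" if k: "1 \<le> k" for k
  proof (cases "n \<le> k")
    case True
    then show ?thesis using restrict[of "k - n"] E[of "k - n"] by simp
  next
    case False
    then have "?V \<inter> fball S k = U \<inter> fball S k"
      using restrict[of 0] E0 fball_mono[of k n S] by auto
    then show ?thesis using openin_sort_restrict[OF k _ U] False by simp
  qed
  moreover have "?V \<subseteq> carr S" by (intro UN_least order_trans[OF sub fball_subset_carr])
  ultimately have "openin (from_models S T) ?V" unfolding openin_from_models_iff by blast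
  moreover have "?V \<inter> fball S n = U" using restrict[of 0] E0 by simp
  ultimately show ?thesis by blast
qed

lemma to_models_from_models: "n \<ge> 1 \<Longrightarrow> to_models S (from_models S T) n = T n"
  unfolding to_models_def
proof (rule topology_eq[THEN iffD2], intro allI)
  fix A assume n: "n \<ge> 1"
  show "openin (subtopology (from_models S T) (fball S n)) A = openin (T n) A"
  proof
    assume "openin (subtopology (from_models S T) (fball S n)) A"
    then obtain V where "openin (from_models S T) V" "A = V \<inter> fball S n"
      unfolding openin_subtopology by blast
    then show "openin (T n) A" using n unfolding openin_from_models_iff by blast
  next
    assume "openin (T n) A"
    then obtain V where "openin (from_models S T) V" "V \<inter> fball S n = A"
      using open_from_models_extension[OF n] by blast
    then show "openin (subtopology (from_models S T) (fball S n)) A"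
      unfolding openin_subtopology by blast
  qed
qed

lemma openin_from_models_fnorm_less: "openin (from_models S T) {f \<in> carr S. fnorm S f < r}"
  unfolding openin_from_models_iff
proof (intro conjI allI impI)
  fix n :: nat assume "1 \<le> n"
  moreover have "{f \<in> carr S. fnorm S f < r} \<inter> fball S n = {f \<in> fball S n. fnorm S f < r}"
    by (auto simp: fball_def)
  ultimately show "openin (T n) ({f \<in> carr S. fnorm S f < r} \<inter> fball S n)"
    using openin_fnorm_less_sort by simp
qed simp

lemma openin_from_models_open_ball:
  assumes n: "1 \<le> n" and A: "openin (T n) A"
  shows "openin (from_models S T) (A \<inter> {f \<in> carr S. fnorm S f < real n})"
proof -
  obtain V where V: "openin (from_models S T) V" "V \<inter> fball S n = A"
    using open_from_models_extension[OF n A] by blast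
  have "A \<inter> {f \<in> carr S. fnorm S f < real n} = V \<inter> {f \<in> carr S. fnorm S f < real n}"
    using V(2) by (auto simp: fball_def)
  then show ?thesis using V(1) openin_from_models_fnorm_less by (simp add: openin_Int)
qed

lemma proj_continuous_from_models: "continuous_map (from_models S T) X (proj S)"
  unfolding continuous_map
proof (intro conjI allI impI)
  show "proj S ` topspace (from_models S T) \<subseteq> topspace X"
    using proj_image by (simp add: topspace_from_models_eq)
  fix U assume U: "openin X U"
  show "openin (from_models S T) {f \<in> topspace (from_models S T). proj S f \<in> U}"
    unfolding openin_from_models_iff topspace_from_models_eq
  proof (intro conjI allI impI)
    fix n :: nat assume n: "1 \<le> n"
    have "openin (T n) {f \<in> topspace (T n). proj S f \<in> U}"
      using proj_continuous_sort[OF n] U by (rule openin_continuous_map_preimage)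
    moreover have "{f \<in> topspace (T n). proj S f \<in> U} = {f \<in> carr S. proj S f \<in> U} \<inter> fball S n"
      using topspace_sort[OF n] by (auto simp: fball_def)
    ultimately show "openin (T n) ({f \<in> carr S. proj S f \<in> U} \<inter> fball S n)" by simp
  qed blast
qed

lemma proj_open_from_models: "open_map (from_models S T) X (proj S)"
  unfolding open_map_def
proof (intro allI impI)
  fix U assume U: "openin (from_models S T) U"
  show "openin X (proj S ` U)"
  proof (rule openin_subopen[THEN iffD2], rule ballI)
    fix x assume "x \<in> proj S ` U"
    then obtain f where fU: "f \<in> U" and xf: "x = proj S f" by blast
    have "f \<in> carr S" using U fU unfolding openin_from_models_iff by blast
    then obtain n where n: "n \<ge> 1" "f \<in> fball S n" using exists_fball_interior[of f S] by blast
    have "openin (T n) (U \<inter> fball S n)" using U n(1) unfolding openin_from_models_iff by blast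
    then have "openin X (proj S ` (U \<inter> fball S n))"
      using cm_bundle_proj_open[OF cm_bundle_sort[OF n(1)]] unfolding open_map_def by blast
    moreover have "x \<in> proj S ` (U \<inter> fball S n)" unfolding xf using fU n(2) by blast
    ultimately show "\<exists>V. openin X V \<and> x \<in> V \<and> V \<subseteq> proj S ` U" by blast
  qed
qed

lemma fsmul_perturb_mem:
  assumes c0: "c0 \<in> K" and c: "c \<in> K" and g: "g \<in> carr S" "fnorm S g < real n"
    and c_near: "cmod (c - c0) < d" "d \<le> 1" "d * real n \<le> e"
    and M: "1 \<le> M" "(cmod c0 + 1) * real n \<le> real M"
    and V: "fsmul S c0 g \<in> V"
    and Ve: "{h \<in> topspace (T M). \<exists>h' \<in> V. proj S h = proj S h' \<and> fnorm S (fsub S h h') < e} \<subseteq> W"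
  shows "fsmul S c g \<in> W"
proof -
  have cg: "fsmul S c g \<in> carr S" "proj S (fsmul S c g) = proj S g"
    using fsmul_mem[OF c g(1)] by simp_all
  have c0g: "proj S (fsmul S c0 g) = proj S g" using fsmul_mem[OF c0 g(1)] by simp
  have ng: "0 \<le> fnorm S g" using fnorm_nonneg[OF g(1)] .
  have "cmod c \<le> cmod c0 + cmod (c - c0)" using norm_triangle_ineq[of c0 "c - c0"] by simp
  then have "cmod c \<le> cmod c0 + 1" using c_near(1,2) by linarith
  then have "fnorm S (fsmul S c g) \<le> (cmod c0 + 1) * real n"
    using fnorm_fsmul[OF c g(1)] g(2) ng by (simp add: mult_mono)
  then have top: "fsmul S c g \<in> topspace (T M)"
    using cg(1) M topspace_sort[OF M(1)] by (simp add: fball_def)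
  have "fnorm S (fsub S (fsmul S c g) (fsmul S c0 g)) = cmod (c - c0) * fnorm S g"
    by (rule fnorm_fsub_fsmul_fsmul[OF c c0 g(1)])
  also have "\<dots> \<le> cmod (c - c0) * real n" using g(2) by (simp add: mult_left_mono)
  also have "\<dots> < d * real n"
    using c_near(1) g(2) ng by (intro mult_strict_right_mono) linarith+
  finally have close: "fnorm S (fsub S (fsmul S c g) (fsmul S c0 g)) < e" using c_near(3) by linarith
  have "proj S (fsmul S c g) = proj S (fsmul S c0 g) \<and> fnorm S (fsub S (fsmul S c g) (fsmul S c0 g)) < e"
    using cg(2) c0g close by simp
  then have "\<exists>h' \<in> V. proj S (fsmul S c g) = proj S h' \<and> fnorm S (fsub S (fsmul S c g) h') < e"
    using V by (rule bexI)
  then have "fsmul S c g \<in> {h \<in> topspace (T M). \<exists>h' \<in> V. proj S h = proj S h' \<and> fnorm S (fsub S h h') < e}"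
    using top by simp
  then show ?thesis using Ve by blast
qed

lemma fsmul_nbhd_from_models:
  assumes W: "openin (from_models S T) W" and c0: "c0 \<in> K" and f0: "f0 \<in> carr S"
    and c0f0: "fsmul S c0 f0 \<in> W"
  obtains d A where "d > 0" "openin (from_models S T) A" "f0 \<in> A"
    "\<And>c g. c \<in> K \<Longrightarrow> cmod (c - c0) < d \<Longrightarrow> g \<in> A \<Longrightarrow> fsmul S c g \<in> W"
proof -
  obtain n where n: "n \<ge> 1" "fnorm S f0 < real n" using exists_fball_interior[of f0 S] f0 by blast
  \<comment> \<open>all products c g with c near c0 and g in the open ball of radius n lie in the sort M\<close>
  define M where "M = nat \<lceil>(cmod c0 + 1) * real n\<rceil>"
  have M: "(cmod c0 + 1) * real n \<le> real M" unfolding M_def by (rule real_nat_ceiling_ge)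
  have "1 * 1 \<le> (cmod c0 + 1) * real n" using n(1) by (intro mult_mono) auto
  then have M1: "1 \<le> M" using M by linarith
  have M0: "cmod c0 * real n \<le> real M" using M n(1) by (simp add: algebra_simps)
  have "fnorm S (fsmul S c0 f0) \<le> cmod c0 * real n"
    using fnorm_fsmul[OF c0 f0] n(2) by (simp add: mult_left_mono)
  then have "fsmul S c0 f0 \<in> W \<inter> fball S M"
    using c0f0 M0 fsmul_mem[OF c0 f0] by (simp add: fball_def)
  moreover have "openin (T M) (W \<inter> fball S M)" using W M1 unfolding openin_from_models_iff by blast
  ultimately obtain V e where V: "openin (T M) V" "fsmul S c0 f0 \<in> V" "e > 0"
    and Ve: "{h \<in> topspace (T M). \<exists>h' \<in> V. proj S h = proj S h' \<and> fnorm S (fsub S h h') < e} \<subseteq> W \<inter> fball S M"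
    using cm_bundle_uniform_nbhd[OF cm_bundle_sort[OF M1], of "W \<inter> fball S M" "fsmul S c0 f0"] by blast
  let ?A = "{g \<in> topspace (T n). fsmul S c0 g \<in> V} \<inter> {f \<in> carr S. fnorm S f < real n}"
  have "openin (T n) {g \<in> topspace (T n). fsmul S c0 g \<in> V}"
    using fsmul_continuous_sort_le[OF c0 n(1) M1 M0] V(1) by (rule openin_continuous_map_preimage)
  then have A: "openin (from_models S T) ?A" by (rule openin_from_models_open_ball[OF n(1)])
  have f0A: "f0 \<in> ?A" using n V(2) f0 topspace_sort[OF n(1)] by (simp add: fball_def)
  define d where "d = min 1 (e / real n)"
  have d: "d > 0" "d \<le> 1" "d * real n \<le> e" using V(3) n(1) by (auto simp: d_def min_def field_simps)
  show thesis
  proof (rule that[OF d(1) A f0A])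
    fix c g assume c: "c \<in> K" "cmod (c - c0) < d" and g: "g \<in> ?A"
    then have "g \<in> carr S" "fnorm S g < real n" "fsmul S c0 g \<in> V" by simp_all
    then have "fsmul S c g \<in> W \<inter> fball S M"
      using fsmul_perturb_mem[OF c0 c(1) _ _ c(2) d(2,3) M1 M _ Ve] by blast
    then show "fsmul S c g \<in> W" by blast
  qed
qed

lemma fsmul_continuous_from_models:
  "continuous_map (prod_topology (top_of_set K) (from_models S T)) (from_models S T) (\<lambda>(c, f). fsmul S c f)"
  unfolding continuous_map
proof (intro conjI allI impI)
  show "(\<lambda>(c, f). fsmul S c f) ` topspace (prod_topology (top_of_set K) (from_models S T))
      \<subseteq> topspace (from_models S T)"
    using fsmul_mem by (auto simp: topspace_from_models_eq)
  fix W assume W: "openin (from_models S T) W"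
  let ?P = "{p \<in> topspace (prod_topology (top_of_set K) (from_models S T)). (\<lambda>(c, f). fsmul S c f) p \<in> W}"
  show "openin (prod_topology (top_of_set K) (from_models S T)) ?P"
    unfolding openin_prod_topology_alt
  proof (intro allI impI)
    fix c0 f0 assume "(c0, f0) \<in> ?P"
    then have c0: "c0 \<in> K" and f0: "f0 \<in> carr S" and c0f0: "fsmul S c0 f0 \<in> W"
      by (simp_all add: topspace_from_models_eq)
    obtain d A where d: "d > 0" and A: "openin (from_models S T) A" "f0 \<in> A"
      and near: "\<And>c g. c \<in> K \<Longrightarrow> cmod (c - c0) < d \<Longrightarrow> g \<in> A \<Longrightarrow> fsmul S c g \<in> W"
      using fsmul_nbhd_from_models[OF W c0 f0 c0f0] by blast
    have "(K \<inter> ball c0 d) \<times> A \<subseteq> ?P"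
    proof
      fix p assume "p \<in> (K \<inter> ball c0 d) \<times> A"
      then obtain c g where p: "p = (c, g)" and c: "c \<in> K" "dist c0 c < d" and g: "g \<in> A"
        by auto
      have "fsmul S c g \<in> W" using near[OF c(1) _ g] c(2) by (simp add: dist_norm norm_minus_commute)
      moreover have "g \<in> carr S" using openin_subset[OF A(1)] g topspace_from_models_eq by blast
      ultimately show "p \<in> ?P" using p c(1) by (simp add: topspace_from_models_eq)
    qed
    moreover have "openin (top_of_set K) (K \<inter> ball c0 d)" by (rule openin_open_Int) simp
    moreover have "c0 \<in> K \<inter> ball c0 d" using c0 d by simp
    ultimately show "\<exists>U V. openin (top_of_set K) U \<and> openin (from_models S T) V \<and> c0 \<in> U \<and> f0 \<in> V \<and> U \<times> V \<subseteq> ?P"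
      using A by blast
  qed
qed

lemma fadd_nbhd_from_models:
  assumes W: "openin (from_models S T) W" and fg: "f0 \<in> carr S" "g0 \<in> carr S" "proj S g0 = proj S f0"
    and sum: "fadd S f0 g0 \<in> W"
  obtains O1 O2 where "openin (from_models S T) O1" "openin (from_models S T) O2" "f0 \<in> O1" "g0 \<in> O2"
    "\<And>f g. f \<in> O1 \<Longrightarrow> g \<in> O2 \<Longrightarrow> proj S g = proj S f \<Longrightarrow> fadd S f g \<in> W"
proof -
  obtain n1 where n1: "n1 \<ge> 1" "fnorm S f0 < real n1" using exists_fball_interior[of f0 S] fg(1) by blast
  obtain n2 where n2: "n2 \<ge> 1" "fnorm S g0 < real n2" using exists_fball_interior[of g0 S] fg(2) by blast
  define n where "n = max n1 n2"
  have n: "n \<ge> 1" "fnorm S f0 < real n" "fnorm S g0 < real n" using n1 n2 by (auto simp: n_def)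
  let ?Zn = "subtopology (prod_topology (T n) (T n)) (fibprod (carr S) (proj S))"
  have topZn: "topspace ?Zn = (fball S n \<times> fball S n) \<inter> fibprod (carr S) (proj S)"
    using topspace_sort[OF n(1)] by simp
  have "openin (T (n + n)) (W \<inter> fball S (n + n))" using W n(1) unfolding openin_from_models_iff by simp
  then have "openin ?Zn {p \<in> topspace ?Zn. (\<lambda>(f, g). fadd S f g) p \<in> W \<inter> fball S (n + n)}"
    using fadd_continuous_sort[OF n(1) n(1)] by (rule openin_continuous_map_preimage[rotated])
  then obtain Q where Q: "openin (prod_topology (T n) (T n)) Q"
    "{p \<in> topspace ?Zn. (\<lambda>(f, g). fadd S f g) p \<in> W \<inter> fball S (n + n)} = Q \<inter> fibprod (carr S) (proj S)"
    unfolding openin_subtopology by blast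
  have "fnorm S (fadd S f0 g0) \<le> real (n + n)"
    using fnorm_fadd_le[OF fg] n by simp
  then have "(f0, g0) \<in> {p \<in> topspace ?Zn. (\<lambda>(f, g). fadd S f g) p \<in> W \<inter> fball S (n + n)}"
    unfolding topZn using fg sum n fadd_mem[OF fg] by (simp add: fibprod_def fball_def)
  then have "(f0, g0) \<in> Q \<inter> fibprod (carr S) (proj S)" by (simp only: Q(2))
  then have "\<exists>O1 O2. openin (T n) O1 \<and> openin (T n) O2 \<and> f0 \<in> O1 \<and> g0 \<in> O2 \<and> O1 \<times> O2 \<subseteq> Q"
    by (intro openin_prod_topology_alt[THEN iffD1, OF Q(1), rule_format]) blast
  then obtain O1 O2 where O: "openin (T n) O1" "openin (T n) O2" "f0 \<in> O1" "g0 \<in> O2" "O1 \<times> O2 \<subseteq> Q"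
    by blast
  let ?B = "{f \<in> carr S. fnorm S f < real n}"
  show thesis
  proof (rule that[OF openin_from_models_open_ball[OF n(1) O(1)] openin_from_models_open_ball[OF n(1) O(2)]])
    show "f0 \<in> O1 \<inter> ?B" "g0 \<in> O2 \<inter> ?B" using O(3,4) fg n by simp_all
    fix f g assume f: "f \<in> O1 \<inter> ?B" and g: "g \<in> O2 \<inter> ?B" and fg': "proj S g = proj S f"
    have "O1 \<subseteq> fball S n" "O2 \<subseteq> fball S n"
      using openin_subset[OF O(1)] openin_subset[OF O(2)] topspace_sort[OF n(1)] by simp_all
    moreover have "(f, g) \<in> fibprod (carr S) (proj S)" using f g fg' by (simp add: fibprod_def)
    ultimately have "(f, g) \<in> Q \<inter> fibprod (carr S) (proj S)" using f g O(5) by blast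
    then have "(f, g) \<in> {p \<in> topspace ?Zn. (\<lambda>(f, g). fadd S f g) p \<in> W \<inter> fball S (n + n)}"
      by (simp only: Q(2))
    then show "fadd S f g \<in> W" by simp
  qed
qed

lemma fadd_continuous_from_models:
  "continuous_map (subtopology (prod_topology (from_models S T) (from_models S T)) (fibprod (carr S) (proj S)))
     (from_models S T) (\<lambda>(f, g). fadd S f g)"
  unfolding continuous_map
proof (intro conjI allI impI)
  let ?Z = "subtopology (prod_topology (from_models S T) (from_models S T)) (fibprod (carr S) (proj S))"
  have topZ: "topspace ?Z = fibprod (carr S) (proj S)"
    by (auto simp: topspace_from_models_eq fibprod_def)
  show "(\<lambda>(f, g). fadd S f g) ` topspace ?Z \<subseteq> topspace (from_models S T)"
    unfolding topZ topspace_from_models_eq using fadd_mem by (auto simp: fibprod_def)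
  fix W assume W: "openin (from_models S T) W"
  let ?R = "{p \<in> topspace ?Z. (\<lambda>(f, g). fadd S f g) p \<in> W}"
  show "openin ?Z ?R"
  proof (rule openin_subopen[THEN iffD2], rule ballI)
    fix p0 assume "p0 \<in> ?R"
    then obtain f0 g0 where p0: "p0 = (f0, g0)" "f0 \<in> carr S" "g0 \<in> carr S" "proj S g0 = proj S f0"
      "fadd S f0 g0 \<in> W"
      unfolding topZ by (cases p0) (auto simp: fibprod_def)
    obtain O1 O2 where O: "openin (from_models S T) O1" "openin (from_models S T) O2" "f0 \<in> O1" "g0 \<in> O2"
      and sum: "\<And>f g. f \<in> O1 \<Longrightarrow> g \<in> O2 \<Longrightarrow> proj S g = proj S f \<Longrightarrow> fadd S f g \<in> W"
      using fadd_nbhd_from_models[OF W p0(2-5)] by blast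
    let ?N = "(O1 \<times> O2) \<inter> fibprod (carr S) (proj S)"
    have "openin (prod_topology (from_models S T) (from_models S T)) (O1 \<times> O2)"
      using O(1,2) by (simp add: openin_prod_Times_iff)
    then have "openin ?Z ?N" by (rule openin_subtopology_Int)
    moreover have "p0 \<in> ?N" using p0 O(3,4) by (simp add: fibprod_def)
    moreover have "?N \<subseteq> ?R" unfolding topZ using sum by (auto simp: fibprod_def)
    ultimately show "\<exists>V. openin ?Z V \<and> p0 \<in> V \<and> V \<subseteq> ?R" by blast
  qed
qed

lemma fzero_nbhd_from_models:
  assumes x: "x \<in> topspace X" and W: "openin (from_models S T) W" "fzero S x \<in> W"
  shows "\<exists>U r. openin X U \<and> x \<in> U \<and> r > 0 \<and> {f \<in> carr S. proj S f \<in> U \<and> fnorm S f < r} \<subseteq> W"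
proof -
  have one: "(1::nat) \<ge> 1" by simp
  have "openin (T 1) (W \<inter> fball S 1)" using W(1) unfolding openin_from_models_iff by simp
  moreover have "fzero S x \<in> W \<inter> fball S 1" using W(2) fzero_fball[OF x] by simp
  ultimately obtain V e where V: "openin (T 1) V" "fzero S x \<in> V" "e > 0"
    and Ve: "{g \<in> topspace (T 1). \<exists>h \<in> V. proj S g = proj S h \<and> fnorm S (fsub S g h) < e} \<subseteq> W \<inter> fball S 1"
    using cm_bundle_uniform_nbhd[OF cm_bundle_sort[OF one], of "W \<inter> fball S 1" "fzero S x"] by blast
  let ?U = "{y \<in> topspace X. fzero S y \<in> V}"
  have U: "openin X ?U" using fzero_continuous_sort V(1) by (rule openin_continuous_map_preimage)
  define r where "r = min e 1"
  have r: "r > 0" "r \<le> e" "r \<le> 1" using V(3) by (auto simp: r_def)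
  \<comment> \<open>a small g lies within e of the zero of its fibre, which is in V\<close>
  have "{f \<in> carr S. proj S f \<in> ?U \<and> fnorm S f < r} \<subseteq> W"
  proof
    fix g assume g: "g \<in> {f \<in> carr S. proj S f \<in> ?U \<and> fnorm S f < r}"
    then have gS: "g \<in> carr S" and gU: "fzero S (proj S g) \<in> V" and gn: "fnorm S g < r" by auto
    have "g \<in> topspace (T 1)" using gS gn r topspace_sort[OF one] by (simp add: fball_def)
    moreover have "proj S g = proj S (fzero S (proj S g)) \<and> fnorm S (fsub S g (fzero S (proj S g))) < e"
      using fzero_mem[OF proj_mem[OF gS]] fsub_fzero[OF gS] gn r by simp
    then have "\<exists>h \<in> V. proj S g = proj S h \<and> fnorm S (fsub S g h) < e" using gU by (rule bexI)
    ultimately show "g \<in> W" using Ve by blast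
  qed
  then show ?thesis using U x V(2) r(1) by blast
qed

lemma banach_bundle_from_models: "banach_bundle K X S (from_models S T)"
  unfolding banach_bundle_def
proof (intro conjI ballI allI impI)
  fix x U and r :: real assume x: "x \<in> topspace X" and Ur: "openin X U \<and> x \<in> U \<and> r > 0"
  let ?V = "{f \<in> topspace (from_models S T). proj S f \<in> U} \<inter> {f \<in> carr S. fnorm S f < r}"
  have "openin (from_models S T) ?V"
    using openin_continuous_map_preimage[OF proj_continuous_from_models, of U] Ur
      openin_from_models_fnorm_less by blast
  moreover have "fzero S x \<in> ?V"
    using fzero_mem[OF x] fnorm_fzero[OF x] Ur by (simp add: topspace_from_models_eq)
  ultimately show "\<exists>V. openin (from_models S T) V \<and> fzero S x \<in> V \<and>
      V \<subseteq> {f \<in> carr S. proj S f \<in> U \<and> fnorm S f < r}" by blast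
next
  fix x W assume "x \<in> topspace X" and "openin (from_models S T) W \<and> fzero S x \<in> W"
  then show "\<exists>U r. openin X U \<and> x \<in> U \<and> r > 0 \<and> {f \<in> carr S. proj S f \<in> U \<and> fnorm S f < r} \<subseteq> W"
    using fzero_nbhd_from_models by blast
qed (simp_all add: topspace_from_models_eq banach_fibres proj_continuous_from_models
      proj_open_from_models fsmul_continuous_from_models fadd_continuous_from_models
      openin_from_models_fnorm_less)

end

section \<open>Morphisms\<close>

lemma fibrewise_linear_contraction_fball:
  assumes "fibrewise_linear_contraction K S S' \<phi>" and "f \<in> fball S n"
  shows "\<phi> f \<in> fball S' n"
  using assms unfolding fibrewise_linear_contraction_def fball_def by force

lemma bundle_morphism_iff_model_morphism:
  assumes bb: "bundle_of_banach_spaces K X S TE" and bb': "bundle_of_banach_spaces K X S' TE'"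
  shows "bundle_morphism K S TE S' TE' \<phi> \<longleftrightarrow>
    model_morphism K S (to_models S TE) S' (to_models S' TE') \<phi>"
proof (cases "fibrewise_linear_contraction K S S' \<phi>")
  case True
  then have "\<phi> \<in> topspace (subtopology TE (fball S n)) \<rightarrow> fball S' n" for n
    using fibrewise_linear_contraction_fball by auto
  then have "continuous_map (subtopology TE (fball S n)) TE' \<phi> \<longleftrightarrow>
      continuous_map (to_models S TE n) (to_models S' TE' n) \<phi>" for n
    unfolding to_models_def continuous_map_in_subtopology by blast
  then have "continuous_map TE TE' \<phi> \<longleftrightarrow> (\<forall>n\<ge>1. continuous_map (to_models S TE n) (to_models S' TE' n) \<phi>)"
    using bundle_of_banach_spaces.continuous_map_iff_fball[OF bb, of TE' \<phi>] by simp
  then show ?thesis using True unfolding bundle_morphism_def model_morphism_def by simp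
qed (simp add: bundle_morphism_def model_morphism_def)

theorem mainTheorem14:
  fixes X :: "'x topology" and K :: "complex set"
  assumes "compact_space X" and "Hausdorff_space X"
    and "K = range complex_of_real \<or> K = UNIV"
  shows
    "(\<forall>(S :: ('x, 'e) fibred) TE. banach_bundle K X S TE \<longrightarrow>
         model_bundle K X S (to_models S TE)) \<and>
     (\<forall>(S :: ('x, 'e) fibred) T. model_bundle K X S T \<longrightarrow>
         banach_bundle K X S (from_models S T)) \<and>
     (\<forall>(S :: ('x, 'e) fibred) TE. banach_bundle K X S TE \<longrightarrow>
         from_models S (to_models S TE) = TE) \<and>
     (\<forall>(S :: ('x, 'e) fibred) T. model_bundle K X S T \<longrightarrow>
         (\<forall>n \<ge> 1. to_models S (from_models S T) n = T n)) \<and>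
     (\<forall>(S :: ('x, 'e) fibred) TE (S' :: ('x, 'e2) fibred) TE' \<phi>.
         banach_bundle K X S TE \<and> banach_bundle K X S' TE' \<longrightarrow>
         (bundle_morphism K S TE S' TE' \<phi> \<longleftrightarrow>
          model_morphism K S (to_models S TE) S' (to_models S' TE') \<phi>))"
proof -
  have K: "scalar_field K" using assms(3) by (rule scalar_field.intro)
  have banach: "banach_bundle K X S TE \<Longrightarrow> bundle_of_banach_spaces K X S TE"
    for S :: "('x, 'b) fibred" and TE
    using K by (simp add: bundle_of_banach_spaces_def bundle_of_banach_spaces_axioms_def)
  have models: "model_bundle K X S T \<Longrightarrow> bundle_of_models K X S T"
    for S :: "('x, 'e) fibred" and T
    using K by (simp add: bundle_of_models_def bundle_of_models_axioms_def)
  show ?thesis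
    using bundle_of_banach_spaces.model_bundle_to_models[OF banach]
      bundle_of_models.banach_bundle_from_models[OF models]
      bundle_of_banach_spaces.from_models_to_models[OF banach]
      bundle_of_models.to_models_from_models[OF models]
      bundle_morphism_iff_model_morphism[OF banach banach]
    by blast
qed

end
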